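(* Let $p,q\in\mathbb R^3$ with $|p|\ge\frac32q^0$ and $\omega\in\mathbb S^2$. Then for any multi-index $\beta\in\mathbb N^3\setminus\{0\}$ (derivatives $\partial_\beta$ in $p$) there exists an integer $n=n(\beta)\ge1$ such that $$\frac{|\partial_\beta(v_\phi\chi_{A^c})|}{|v_\phi|}+|\partial_\beta p'|+|\partial_\beta q'|\lesssim\langle q\rangle^n.$$
   Context: $\mathfrak c\ge1$ is the speed of light; $p^0=\sqrt{\mathfrak c^2+|p|^2}$, $q^0=\sqrt{\mathfrak c^2+|q|^2}$, $\langle q\rangle=\sqrt{1+|q|^2}$; $\mathfrak s=2(p^0q^0-p\cdot q+\mathfrak c^2)$, $g=\sqrt{2(p^0q^0-p\cdot q-\mathfrak c^2)}$, $v_\phi=\frac{\mathfrak c}4\frac{g\sqrt{\mathfrak s}}{p^0q^0}$, $\gamma_0=(p^0+q^0)/\sqrt{\mathfrak s}$, and $p'=\frac12(p+q)+\frac12g\big(\omega+(\gamma_0-1)(p+q)\frac{(p+q)\cdot\omega}{|p+q|^2}\big)$, $q'=\frac12(p+q)-\frac12g\big(\omega+(\gamma_0-1)(p+q)\frac{(p+q)\cdot\omega}{|p+q|^2}\big)$. Let $\chi\in C_0^\infty([0,\infty))$ with $0\le\chi\le1$, $\chi(r)=1$ on $[0,1]$, $\chi(r)=0$ for $r>2$, and $\chi_{A^c}(p,q)=\big(1-\chi(\frac{p^0}{\mathfrak c})\big)\big(1-\chi(\frac23\frac{|p|}{q^0})\big)$. Implicit constants are independent of $\mathfrak c$, $p$,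 $q$, $\omega$. *)

theory Defs
  imports "HOL-Analysis.Analysis"
begin

type_synonym vec3 = "real ^ 3"

definition en :: "real \<Rightarrow> vec3 \<Rightarrow> real" where
  "en c p = sqrt (c^2 + (norm p)^2)"

definition jbr :: "vec3 \<Rightarrow> real" where
  "jbr q = sqrt (1 + (norm q)^2)"

definition sss :: "real \<Rightarrow> vec3 \<Rightarrow> vec3 \<Rightarrow> real" where
  "sss c p q = 2 * (en c p * en c q - p \<bullet> q + c^2)"

definition ggg :: "real \<Rightarrow> vec3 \<Rightarrow> vec3 \<Rightarrow> real" where
  "ggg c p q = sqrt (2 * (en c p * en c q - p \<bullet> q - c^2))"

definition vphi :: "real \<Rightarrow> vec3 \<Rightarrow> vec3 \<Rightarrow> real" where
  "vphi c p q = c / 4 * (ggg c p q * sqrt (sss c p q)) / (en c p * en c q)"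

definition gamma0 :: "real \<Rightarrow> vec3 \<Rightarrow> vec3 \<Rightarrow> real" where
  "gamma0 c p q = (en c p + en c q) / sqrt (sss c p q)"

definition dirv :: "real \<Rightarrow> vec3 \<Rightarrow> vec3 \<Rightarrow> vec3 \<Rightarrow> vec3" where
  "dirv c p q \<omega> = \<omega> + ((gamma0 c p q - 1) * ((p + q) \<bullet> \<omega>) / (norm (p + q))^2) *\<^sub>R (p + q)"

definition ppost :: "real \<Rightarrow> vec3 \<Rightarrow> vec3 \<Rightarrow> vec3 \<Rightarrow> vec3" where
  "ppost c p q \<omega> = (1/2) *\<^sub>R (p + q) + (ggg c p q / 2) *\<^sub>R dirv c p q \<omega>"

definition qpost :: "real \<Rightarrow> vec3 \<Rightarrow> vec3 \<Rightarrow> vec3 \<Rightarrow> vec3" where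
  "qpost c p q \<omega> = (1/2) *\<^sub>R (p + q) - (ggg c p q / 2) *\<^sub>R dirv c p q \<omega>"

definition chiAc :: "(real \<Rightarrow> real) \<Rightarrow> real \<Rightarrow> vec3 \<Rightarrow> vec3 \<Rightarrow> real" where
  "chiAc chi c p q = (1 - chi (en c p / c)) * (1 - chi (2/3 * norm p / en c q))"

definition pdiff :: "3 \<Rightarrow> (vec3 \<Rightarrow> 'a::real_normed_vector) \<Rightarrow> vec3 \<Rightarrow> 'a" where
  "pdiff i f = (\<lambda>p. vector_derivative (\<lambda>t. f (p + t *\<^sub>R axis i 1)) (at 0))"

definition pdiffs :: "(3 \<Rightarrow> nat) \<Rightarrow> (vec3 \<Rightarrow> 'a::real_normed_vector) \<Rightarrow> vec3 \<Rightarrow> 'a" where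
  "pdiffs \<beta> f = (pdiff 1 ^^ \<beta> 1) ((pdiff 2 ^^ \<beta> 2) ((pdiff 3 ^^ \<beta> 3) f))"

end

theory Submission
  imports Defs
begin

text \<open>Call a function of \<open>(c, q, \<omega>, p)\<close> a symbol if on the region \<open>|p| > 4/3 q\<^sup>0\<close> it is bounded
  by a power of \<open>\<langle>q\<rangle>\<close> and each of its \<open>p\<close>-derivatives is \<open>1/p\<^sup>0\<close> times a symbol. Symbols are
  closed under sums and products, and under inverses and square roots of functions bounded below
  by a negative power of \<open>\<langle>q\<rangle>\<close>; \<open>p/p\<^sup>0\<close>, \<open>q/p\<^sup>0\<close>, \<open>c/p\<^sup>0\<close> and \<open>\<chi>(p\<^sup>0/c)\<close> are symbols.
  The key estimate \<open>g\<^sup>2/(p\<^sup>0q\<^sup>0) \<ge> c\<^sup>4/(100 (q\<^sup>0)\<^sup>4) \<ge> \<langle>q\<rangle>\<^sup>-\<^sup>4/100\<close> makes \<open>g\<^sup>2/(p\<^sup>0q\<^sup>0)\<close> and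
  \<open>s/(p\<^sup>0q\<^sup>0)\<close> symbols bounded below. Hence
  \<open>vphi \<cdot> chiAc = c/4 \<surd>(g\<^sup>2/(p\<^sup>0q\<^sup>0)) \<surd>(s/(p\<^sup>0q\<^sup>0)) chiAc\<close> and all its derivatives are \<open>c\<close>
  times symbols, while \<open>vphi\<close> itself is \<open>c\<close> times a symbol bounded below. Likewise \<open>p'\<close> and
  \<open>q'\<close> are \<open>q/2 + p\<^sup>0 Z\<close> with \<open>Z\<close> a vector of symbols, so their derivatives of positive order
  are symbols.\<close>

text \<open>Functions of \<open>(c, q, \<omega>, p)\<close>; derivatives are always taken in the last argument.\<close>
type_synonym kin_fun = "real \<Rightarrow> vec3 \<Rightarrow> vec3 \<Rightarrow> vec3 \<Rightarrow> real"

lemma jbr_ge_1: "1 \<le> jbr q"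
  unfolding jbr_def by simp

lemma jbr_pow_mono: "k \<le> n \<Longrightarrow> jbr q ^ k \<le> jbr q ^ n"
  using jbr_ge_1 by (rule power_increasing[rotated])

lemma en_squared: "en c p ^ 2 = c^2 + (norm p)^2"
  unfolding en_def by simp

lemma en_ge_abs: "\<bar>c\<bar> \<le> en c p"
  unfolding en_def by simp

lemma en_ge_norm: "norm p \<le> en c p"
  unfolding en_def using real_sqrt_ge_abs2[of c "norm p"] by simp

lemma en_pos: "c \<noteq> 0 \<Longrightarrow> 0 < en c p"
  unfolding en_def by (simp add: add_pos_nonneg)

lemma en_le_mult_jbr:
  assumes "1 \<le> c"
  shows "en c q \<le> c * jbr q"
proof (rule power2_le_imp_le)
  have "c^2 + norm q^2 \<le> c^2 + c^2 * norm q^2"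
    using assms by (simp add: one_le_power mult_right_mono[of 1 "c^2" "norm q^2", simplified])
  thus "en c q ^ 2 \<le> (c * jbr q)^2"
    unfolding en_squared jbr_def by (simp add: power_mult_distrib algebra_simps)
  show "0 \<le> c * jbr q" using assms jbr_ge_1[of q] by simp
qed

section \<open>Derivatives along coordinate lines\<close>

lemma norm_line_squared:
  fixes p :: "real^'n"
  shows "norm (p + t *\<^sub>R axis i 1)^2 = norm p ^ 2 + 2 * t * p $ i + t^2"
proof -
  have "norm (p + t *\<^sub>R axis i 1)^2 = (p + t *\<^sub>R axis i 1) \<bullet> (p + t *\<^sub>R axis i 1)"
    by (simp add: power2_norm_eq_inner)
  also have "\<dots> = p \<bullet> p + 2 * t * (p \<bullet> axis i 1) + t^2 * (axis i 1 \<bullet> axis i (1::real))"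
    by (simp add: inner_add_left inner_add_right inner_commute algebra_simps power2_eq_square)
  finally show ?thesis by (simp add: inner_axis power2_norm_eq_inner inner_axis_axis)
qed

lemma has_real_derivative_norm_squared_line:
  fixes p :: "real^'n"
  shows "((\<lambda>t. norm (p + t *\<^sub>R axis i 1)^2) has_real_derivative 2 * p $ i) (at 0)"
  unfolding norm_line_squared by (auto intro!: derivative_eq_intros)

lemma has_real_derivative_norm_line:
  fixes p :: "real^'n"
  assumes "p \<noteq> 0"
  shows "((\<lambda>t. norm (p + t *\<^sub>R axis i 1)) has_real_derivative p $ i / norm p) (at 0)"
proof -
  have "((\<lambda>t. sqrt (norm (p + t *\<^sub>R axis i 1)^2)) has_real_derivative
          inverse (sqrt (norm p ^ 2)) / 2 * (2 * p $ i)) (at 0)"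
    by (rule DERIV_chain2[OF _ has_real_derivative_norm_squared_line])
       (use assms DERIV_real_sqrt[of "norm p ^ 2"] in simp)
  thus ?thesis by (simp add: divide_simps)
qed

lemma has_real_derivative_en_line:
  assumes "c \<noteq> 0"
  shows "((\<lambda>t. en c (p + t *\<^sub>R axis i 1)) has_real_derivative p $ i / en c p) (at 0)"
proof -
  have "((\<lambda>t. sqrt (c^2 + norm (p + t *\<^sub>R axis i 1)^2)) has_real_derivative
          inverse (sqrt (c^2 + norm p ^ 2)) / 2 * (0 + 2 * p $ i)) (at 0)"
    by (rule DERIV_chain2[OF _ DERIV_add[OF DERIV_const has_real_derivative_norm_squared_line]])
       (use assms in \<open>simp add: DERIV_real_sqrt add_pos_nonneg\<close>)
  thus ?thesis unfolding en_def by (simp add: divide_simps)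
qed

lemma has_real_derivative_component_line:
  fixes p :: "real^'n"
  shows "((\<lambda>t. (p + t *\<^sub>R axis i 1) $ j) has_real_derivative (if i = j then 1 else 0)) (at 0)"
proof -
  have "(\<lambda>t. (p + t *\<^sub>R axis i 1) $ j) = (\<lambda>t. p $ j + t * (if i = j then 1 else 0))"
    by (auto simp: axis_def)
  thus ?thesis by (auto intro!: derivative_eq_intros)
qed

lemma has_vector_derivative_vec_lambda:
  fixes h :: "real \<Rightarrow> real^'n"
  assumes "\<And>j. ((\<lambda>t. h t $ j) has_real_derivative d j) (at x)"
  shows "(h has_vector_derivative (\<chi> j. d j)) (at x)"
  unfolding has_vector_derivative_def
proof (rule has_derivative_componentwise_within[THEN iffD2], intro ballI)
  fix b :: "real^'n" assume "b \<in> Basis"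
  then obtain i where b: "b = axis i 1" by (auto simp: Basis_vec_def)
  have "(\<lambda>t. t * d i) = (*) (d i)" by (auto simp: mult.commute)
  with assms[of i] show "((\<lambda>t. h t \<bullet> b) has_derivative (\<lambda>t. t *\<^sub>R (\<chi> j. d j) \<bullet> b)) (at x)"
    unfolding b has_field_derivative_def by (simp add: inner_axis)
qed

lemma pdiff_eqI:
  fixes f g :: "vec3 \<Rightarrow> 'a::real_normed_vector"
  assumes "open U" "p \<in> U" "\<And>x. x \<in> U \<Longrightarrow> f x = g x"
    and "((\<lambda>t. g (p + t *\<^sub>R axis i 1)) has_vector_derivative D) (at 0)"
  shows "pdiff i f p = D"
proof -
  have "open ((\<lambda>t::real. p + t *\<^sub>R axis i 1) -` U)"
    using assms(1) by (intro continuous_open_vimage continuous_intros)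
  hence "((\<lambda>t. f (p + t *\<^sub>R axis i 1)) has_vector_derivative D) (at 0)"
    by (rule has_vector_derivative_transform_within_open[OF assms(4)]) (use assms(2,3) in auto)
  thus ?thesis unfolding pdiff_def by (rule vector_derivative_at)
qed

section \<open>Symbols\<close>

definition in_region :: "real \<Rightarrow> vec3 \<Rightarrow> vec3 \<Rightarrow> vec3 \<Rightarrow> bool" where
  "in_region c q \<omega> p \<longleftrightarrow> 1 \<le> c \<and> norm \<omega> = 1 \<and> 4/3 * en c q < norm p"

lemma in_region_bounds:
  assumes "in_region c q \<omega> p"
  shows "1 \<le> c" "norm \<omega> = 1" "4/3 * en c q < norm p" "c \<le> en c q" "norm q \<le> en c q"
    "c \<le> en c p" "norm p \<le> en c p" "en c p \<le> 5/4 * norm p" "en c q < en c p"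
    "en c q \<le> c * jbr q"
proof -
  show c: "1 \<le> c" and "norm \<omega> = 1" and pq: "4/3 * en c q < norm p"
    using assms by (simp_all add: in_region_def)
  show "c \<le> en c q" "c \<le> en c p" using en_ge_abs c by (metis abs_of_nonneg order.trans zero_le_one)+
  show "norm q \<le> en c q" "norm p \<le> en c p" by (rule en_ge_norm)+
  show "en c q \<le> c * jbr q" using c by (rule en_le_mult_jbr)
  have Q: "0 < en c q" using c by (simp add: en_pos)
  thus "en c q < en c p" using pq en_ge_norm[of p c] by linarith
  have "en c p ^ 2 \<le> (5/4 * norm p)^2"
  proof -
    have "c^2 \<le> en c q ^ 2" using en_ge_abs[of c q] c by (simp add: power_mono)
    also have "\<dots> \<le> (3/4 * norm p)^2" using pq Q by (intro power_mono) auto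
    finally show ?thesis unfolding en_squared[of c p] by (simp add: power2_eq_square)
  qed
  thus "en c p \<le> 5/4 * norm p" by (rule power2_le_imp_le) simp
qed

lemma in_region_en_pos:
  "in_region c q \<omega> p \<Longrightarrow> 0 < en c p" "in_region c q \<omega> p \<Longrightarrow> 0 < en c q"
  using in_region_bounds(1,4,6) by (meson less_le_trans zero_less_one)+

text \<open>The strict constant \<open>4/3\<close> (the theorem only needs \<open>3/2\<close>) makes the region open in \<open>p\<close>,
  so derivatives at its points only see values inside it.\<close>
lemma in_region_nhd:
  assumes "in_region c q \<omega> p"
  obtains U where "open U" "p \<in> U" "\<And>x. x \<in> U \<Longrightarrow> in_region c q \<omega> x"
proof
  show "open {x. 4/3 * en c q < norm x}" by (intro open_Collect_less continuous_intros)
qed (use assms in \<open>auto simp: in_region_def\<close>)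

definition poly_bounded :: "kin_fun \<Rightarrow> bool" where
  "poly_bounded F \<longleftrightarrow>
     (\<exists>C>0. \<exists>n. \<forall>c q \<omega> p. in_region c q \<omega> p \<longrightarrow> \<bar>F c q \<omega> p\<bar> \<le> C * jbr q ^ n)"

definition poly_lower_bounded :: "kin_fun \<Rightarrow> bool" where
  "poly_lower_bounded F \<longleftrightarrow>
     (\<exists>d>0. \<exists>n. \<forall>c q \<omega> p. in_region c q \<omega> p \<longrightarrow> d / jbr q ^ n \<le> F c q \<omega> p)"

lemma poly_boundedI:
  assumes "\<And>c q \<omega> p. in_region c q \<omega> p \<Longrightarrow> \<bar>F c q \<omega> p\<bar> \<le> C * jbr q ^ n"
  shows "poly_bounded F"
  unfolding poly_bounded_def
proof (intro exI[of _ "max C 1"] conjI exI[of _ n] allI impI)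
  fix c q \<omega> p assume "in_region c q \<omega> p"
  hence "\<bar>F c q \<omega> p\<bar> \<le> C * jbr q ^ n" by (rule assms)
  also have "\<dots> \<le> max C 1 * jbr q ^ n" using jbr_ge_1[of q] by (intro mult_right_mono) auto
  finally show "\<bar>F c q \<omega> p\<bar> \<le> max C 1 * jbr q ^ n" .
qed simp

lemma poly_boundedI_const:
  "(\<And>c q \<omega> p. in_region c q \<omega> p \<Longrightarrow> \<bar>F c q \<omega> p\<bar> \<le> C) \<Longrightarrow> poly_bounded F"
  by (rule poly_boundedI[where n = 0]) simp

lemma poly_boundedE:
  assumes "poly_bounded F"
  obtains C n where "0 < C" "\<And>c q \<omega> p. in_region c q \<omega> p \<Longrightarrow> \<bar>F c q \<omega> p\<bar> \<le> C * jbr q ^ n"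
  using assms unfolding poly_bounded_def by blast

lemma poly_bounded_mono:
  "poly_bounded G \<Longrightarrow> (\<And>c q \<omega> p. in_region c q \<omega> p \<Longrightarrow> \<bar>F c q \<omega> p\<bar> \<le> \<bar>G c q \<omega> p\<bar>) \<Longrightarrow>
    poly_bounded F"
proof -
  assume G: "poly_bounded G" and FG: "\<And>c q \<omega> p. in_region c q \<omega> p \<Longrightarrow> \<bar>F c q \<omega> p\<bar> \<le> \<bar>G c q \<omega> p\<bar>"
  obtain C n where "\<And>c q \<omega> p. in_region c q \<omega> p \<Longrightarrow> \<bar>G c q \<omega> p\<bar> \<le> C * jbr q ^ n"
    using G by (meson poly_boundedE)
  with FG show ?thesis by (intro poly_boundedI[where C = C and n = n]) (meson order_trans)
qed

lemma poly_bounded_abs: "poly_bounded F \<Longrightarrow> poly_bounded (\<lambda>c q \<omega> p. \<bar>F c q \<omega> p\<bar>)"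
  unfolding poly_bounded_def by simp

lemma poly_bounded_add:
  assumes "poly_bounded F" "poly_bounded G"
  shows "poly_bounded (\<lambda>c q \<omega> p. F c q \<omega> p + G c q \<omega> p)"
proof -
  obtain C1 n1 C2 n2 where
    F: "0 < C1" "\<And>c q \<omega> p. in_region c q \<omega> p \<Longrightarrow> \<bar>F c q \<omega> p\<bar> \<le> C1 * jbr q ^ n1" and
    G: "0 < C2" "\<And>c q \<omega> p. in_region c q \<omega> p \<Longrightarrow> \<bar>G c q \<omega> p\<bar> \<le> C2 * jbr q ^ n2"
    using assms by (meson poly_boundedE)
  show ?thesis
  proof (rule poly_boundedI[where C = "C1 + C2" and n = "n1 + n2"])
    fix c q \<omega> p assume r: "in_region c q \<omega> p"
    have "C1 * jbr q ^ n1 \<le> C1 * jbr q ^ (n1 + n2)" "C2 * jbr q ^ n2 \<le> C2 * jbr q ^ (n1 + n2)"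
      using F(1) G(1) by (simp_all add: jbr_pow_mono)
    with F(2)[OF r] G(2)[OF r]
    show "\<bar>F c q \<omega> p + G c q \<omega> p\<bar> \<le> (C1 + C2) * jbr q ^ (n1 + n2)"
      by (simp add: distrib_right abs_triangle_ineq[THEN order_trans])
  qed
qed

lemma poly_bounded_mult:
  assumes "poly_bounded F" "poly_bounded G"
  shows "poly_bounded (\<lambda>c q \<omega> p. F c q \<omega> p * G c q \<omega> p)"
proof -
  obtain C1 n1 C2 n2 where
    F: "0 < C1" "\<And>c q \<omega> p. in_region c q \<omega> p \<Longrightarrow> \<bar>F c q \<omega> p\<bar> \<le> C1 * jbr q ^ n1" and
    G: "0 < C2" "\<And>c q \<omega> p. in_region c q \<omega> p \<Longrightarrow> \<bar>G c q \<omega> p\<bar> \<le> C2 * jbr q ^ n2"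
    using assms by (meson poly_boundedE)
  show ?thesis
  proof (rule poly_boundedI[where C = "C1 * C2" and n = "n1 + n2"])
    fix c q \<omega> p assume r: "in_region c q \<omega> p"
    have "\<bar>F c q \<omega> p\<bar> * \<bar>G c q \<omega> p\<bar> \<le> (C1 * jbr q ^ n1) * (C2 * jbr q ^ n2)"
      using F G r jbr_ge_1[of q] by (intro mult_mono) auto
    thus "\<bar>F c q \<omega> p * G c q \<omega> p\<bar> \<le> C1 * C2 * jbr q ^ (n1 + n2)"
      by (simp add: abs_mult power_add mult_ac)
  qed
qed

lemma poly_bounded_sum:
  "(\<And>j. poly_bounded (F j)) \<Longrightarrow> poly_bounded (\<lambda>c q \<omega> p. \<Sum>j\<in>I. F j c q \<omega> p)"
  by (induction I rule: infinite_finite_induct)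
     (auto intro: poly_bounded_add poly_boundedI_const[of _ 0])

lemma poly_bounded_sqrt:
  assumes "poly_bounded F"
  shows "poly_bounded (\<lambda>c q \<omega> p. sqrt (F c q \<omega> p))"
proof -
  obtain C n where
    F: "0 < C" "\<And>c q \<omega> p. in_region c q \<omega> p \<Longrightarrow> \<bar>F c q \<omega> p\<bar> \<le> C * jbr q ^ n"
    using assms by (meson poly_boundedE)
  show ?thesis
  proof (rule poly_boundedI[where C = "1 + C" and n = n])
    fix c q \<omega> p assume r: "in_region c q \<omega> p"
    let ?a = "\<bar>F c q \<omega> p\<bar>"
    have "sqrt ?a \<le> 1 + ?a"
      by (rule real_le_lsqrt) (auto simp: power2_eq_square algebra_simps)
    moreover have "1 \<le> jbr q ^ n" using jbr_ge_1[of q] by simp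
    ultimately show "\<bar>sqrt (F c q \<omega> p)\<bar> \<le> (1 + C) * jbr q ^ n"
      using F(2)[OF r] by (simp add: real_sqrt_abs' [symmetric] distrib_right)
  qed
qed

lemma poly_lower_boundedE:
  assumes "poly_lower_bounded F"
  obtains d n where "0 < d" "\<And>c q \<omega> p. in_region c q \<omega> p \<Longrightarrow> d / jbr q ^ n \<le> F c q \<omega> p"
  using assms unfolding poly_lower_bounded_def by blast

lemma poly_lower_bounded_pos:
  assumes "poly_lower_bounded F" "in_region c q \<omega> p"
  shows "0 < F c q \<omega> p"
proof -
  obtain d n where "0 < d" "d / jbr q ^ n \<le> F c q \<omega> p"
    using assms by (metis poly_lower_boundedE)
  moreover have "0 < jbr q ^ n" using jbr_ge_1[of q] by simp
  ultimately show ?thesis by (meson divide_pos_pos less_le_trans)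
qed

lemma poly_lower_bounded_mono:
  "poly_lower_bounded F \<Longrightarrow> (\<And>c q \<omega> p. in_region c q \<omega> p \<Longrightarrow> F c q \<omega> p \<le> G c q \<omega> p) \<Longrightarrow>
    poly_lower_bounded G"
  unfolding poly_lower_bounded_def by (meson order_trans)

lemma poly_lower_bounded_mult:
  assumes "poly_lower_bounded F" "poly_lower_bounded G"
  shows "poly_lower_bounded (\<lambda>c q \<omega> p. F c q \<omega> p * G c q \<omega> p)"
proof -
  obtain d1 n1 d2 n2 where
    F: "0 < d1" "\<And>c q \<omega> p. in_region c q \<omega> p \<Longrightarrow> d1 / jbr q ^ n1 \<le> F c q \<omega> p" and
    G: "0 < d2" "\<And>c q \<omega> p. in_region c q \<omega> p \<Longrightarrow> d2 / jbr q ^ n2 \<le> G c q \<omega> p"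
    using assms by (meson poly_lower_boundedE)
  have "d1 * d2 / jbr q ^ (n1 + n2) \<le> F c q \<omega> p * G c q \<omega> p" if r: "in_region c q \<omega> p" for c q \<omega> p
  proof -
    have "0 \<le> d1 / jbr q ^ n1" "0 \<le> d2 / jbr q ^ n2" using F(1) G(1) jbr_ge_1[of q] by auto
    hence "(d1 / jbr q ^ n1) * (d2 / jbr q ^ n2) \<le> F c q \<omega> p * G c q \<omega> p"
      using F(2)[OF r] G(2)[OF r] by (intro mult_mono) auto
    thus ?thesis by (simp add: power_add)
  qed
  thus ?thesis unfolding poly_lower_bounded_def using F(1) G(1) by (intro exI[of _ "d1 * d2"]) auto
qed

lemma poly_lower_bounded_sqrt:
  assumes "poly_lower_bounded F"
  shows "poly_lower_bounded (\<lambda>c q \<omega> p. sqrt (F c q \<omega> p))"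
proof -
  obtain d n where
    F: "0 < d" "\<And>c q \<omega> p. in_region c q \<omega> p \<Longrightarrow> d / jbr q ^ n \<le> F c q \<omega> p"
    using assms by (meson poly_lower_boundedE)
  have "sqrt d / jbr q ^ n \<le> sqrt (F c q \<omega> p)" if r: "in_region c q \<omega> p" for c q \<omega> p
  proof -
    have j: "1 \<le> jbr q ^ n" using jbr_ge_1[of q] by simp
    hence "sqrt (jbr q ^ n) \<le> jbr q ^ n" by (intro real_le_lsqrt) (auto simp: power2_eq_square)
    hence "sqrt d / jbr q ^ n \<le> sqrt d / sqrt (jbr q ^ n)"
      using j F(1) by (intro divide_left_mono) auto
    also have "\<dots> = sqrt (d / jbr q ^ n)" by (simp add: real_sqrt_divide)
    also have "\<dots> \<le> sqrt (F c q \<omega> p)" using F(2)[OF r] by simp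
    finally show ?thesis .
  qed
  thus ?thesis unfolding poly_lower_bounded_def using F(1) by (intro exI[of _ "sqrt d"]) auto
qed

lemma poly_bounded_inverse:
  assumes "poly_lower_bounded F"
  shows "poly_bounded (\<lambda>c q \<omega> p. inverse (F c q \<omega> p))"
proof -
  obtain d n where
    F: "0 < d" "\<And>c q \<omega> p. in_region c q \<omega> p \<Longrightarrow> d / jbr q ^ n \<le> F c q \<omega> p"
    using assms by (meson poly_lower_boundedE)
  show ?thesis
  proof (rule poly_boundedI[where C = "1 / d" and n = n])
    fix c q \<omega> p assume r: "in_region c q \<omega> p"
    have "0 < d / jbr q ^ n" using F(1) jbr_ge_1[of q] by simp
    hence "inverse (F c q \<omega> p) \<le> inverse (d / jbr q ^ n)" using F(2)[OF r] by (intro le_imp_inverse_le)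
    thus "\<bar>inverse (F c q \<omega> p)\<bar> \<le> 1 / d * jbr q ^ n"
      using poly_lower_bounded_pos[OF assms r] by simp
  qed
qed

definition has_scaled_pderiv :: "kin_fun \<Rightarrow> 3 \<Rightarrow> kin_fun \<Rightarrow> bool" where
  "has_scaled_pderiv F i G \<longleftrightarrow> (\<forall>c q \<omega> p. in_region c q \<omega> p \<longrightarrow>
     ((\<lambda>t. F c q \<omega> (p + t *\<^sub>R axis i 1)) has_real_derivative G c q \<omega> p / en c p) (at 0))"

lemma has_scaled_pderivI:
  "(\<And>c q \<omega> p. in_region c q \<omega> p \<Longrightarrow>
     ((\<lambda>t. F c q \<omega> (p + t *\<^sub>R axis i 1)) has_real_derivative G c q \<omega> p / en c p) (at 0)) \<Longrightarrow>
   has_scaled_pderiv F i G"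
  unfolding has_scaled_pderiv_def by blast

lemma has_scaled_pderivD:
  "has_scaled_pderiv F i G \<Longrightarrow> in_region c q \<omega> p \<Longrightarrow>
     ((\<lambda>t. F c q \<omega> (p + t *\<^sub>R axis i 1)) has_real_derivative G c q \<omega> p / en c p) (at 0)"
  unfolding has_scaled_pderiv_def by blast

lemma has_scaled_pderiv_cong:
  assumes "has_scaled_pderiv F i H" "\<And>c q \<omega> p. in_region c q \<omega> p \<Longrightarrow> F c q \<omega> p = G c q \<omega> p"
  shows "has_scaled_pderiv G i H"
proof (rule has_scaled_pderivI)
  fix c q \<omega> p assume r: "in_region c q \<omega> p"
  then obtain U where U: "open U" "p \<in> U" "\<And>x. x \<in> U \<Longrightarrow> in_region c q \<omega> x"
    by (meson in_region_nhd)
  have "open ((\<lambda>t::real. p + t *\<^sub>R axis i 1) -` U)"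
    using U(1) by (intro continuous_open_vimage continuous_intros)
  from has_field_derivative_transform_within_open[OF has_scaled_pderivD[OF assms(1) r] this]
  show "((\<lambda>t. G c q \<omega> (p + t *\<^sub>R axis i 1)) has_real_derivative H c q \<omega> p / en c p) (at 0)"
    using U(2,3) assms(2) by auto
qed

lemma has_scaled_pderiv_const: "has_scaled_pderiv (\<lambda>c q \<omega> p. k c q \<omega>) i (\<lambda>c q \<omega> p. 0)"
  unfolding has_scaled_pderiv_def by simp

lemma has_scaled_pderiv_add:
  "has_scaled_pderiv F i F' \<Longrightarrow> has_scaled_pderiv G i G' \<Longrightarrow>
   has_scaled_pderiv (\<lambda>c q \<omega> p. F c q \<omega> p + G c q \<omega> p) i (\<lambda>c q \<omega> p. F' c q \<omega> p + G' c q \<omega> p)"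
  unfolding has_scaled_pderiv_def by (auto simp: add_divide_distrib intro!: DERIV_add)

lemma has_scaled_pderiv_mult:
  assumes "has_scaled_pderiv F i F'" "has_scaled_pderiv G i G'"
  shows "has_scaled_pderiv (\<lambda>c q \<omega> p. F c q \<omega> p * G c q \<omega> p) i
           (\<lambda>c q \<omega> p. F' c q \<omega> p * G c q \<omega> p + F c q \<omega> p * G' c q \<omega> p)"
proof (rule has_scaled_pderivI)
  fix c q \<omega> p assume r: "in_region c q \<omega> p"
  from DERIV_mult[OF has_scaled_pderivD[OF assms(1) r] has_scaled_pderivD[OF assms(2) r]]
  show "((\<lambda>t. F c q \<omega> (p + t *\<^sub>R axis i 1) * G c q \<omega> (p + t *\<^sub>R axis i 1)) has_real_derivative
          (F' c q \<omega> p * G c q \<omega> p + F c q \<omega> p * G' c q \<omega> p) / en c p) (at 0)"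
    by (simp add: add_divide_distrib mult.commute)
qed

lemma has_scaled_pderiv_inverse:
  assumes "\<And>c q \<omega> p. in_region c q \<omega> p \<Longrightarrow> 0 < F c q \<omega> p" "has_scaled_pderiv F i D"
  shows "has_scaled_pderiv (\<lambda>c q \<omega> p. inverse (F c q \<omega> p)) i
           (\<lambda>c q \<omega> p. - (inverse (F c q \<omega> p) * (inverse (F c q \<omega> p) * D c q \<omega> p)))"
proof (rule has_scaled_pderivI)
  fix c q \<omega> p assume r: "in_region c q \<omega> p"
  have "F c q \<omega> (p + 0 *\<^sub>R axis i 1) \<noteq> 0" using assms(1)[OF r] by simp
  from DERIV_inverse_fun[OF has_scaled_pderivD[OF assms(2) r] this]
  show "((\<lambda>t. inverse (F c q \<omega> (p + t *\<^sub>R axis i 1))) has_real_derivative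
      - (inverse (F c q \<omega> p) * (inverse (F c q \<omega> p) * D c q \<omega> p)) / en c p) (at 0)"
    using assms(1)[OF r] by (simp add: field_simps power2_eq_square)
qed

lemma has_scaled_pderiv_sqrt:
  assumes "\<And>c q \<omega> p. in_region c q \<omega> p \<Longrightarrow> 0 < F c q \<omega> p" "has_scaled_pderiv F i D"
  shows "has_scaled_pderiv (\<lambda>c q \<omega> p. sqrt (F c q \<omega> p)) i
           (\<lambda>c q \<omega> p. 1/2 * (sqrt (F c q \<omega> p) * (inverse (F c q \<omega> p) * D c q \<omega> p)))"
proof (rule has_scaled_pderivI)
  fix c q \<omega> p assume r: "in_region c q \<omega> p"
  have pos: "0 < F c q \<omega> p" using assms(1)[OF r] .
  have "((\<lambda>t. sqrt (F c q \<omega> (p + t *\<^sub>R axis i 1))) has_real_derivative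
          inverse (sqrt (F c q \<omega> p)) / 2 * (D c q \<omega> p / en c p)) (at 0)"
    by (rule DERIV_chain2[OF _ has_scaled_pderivD[OF assms(2) r]])
       (use pos in \<open>simp add: DERIV_real_sqrt\<close>)
  moreover have "inverse (sqrt (F c q \<omega> p)) = sqrt (F c q \<omega> p) * inverse (F c q \<omega> p)"
    using pos by (simp add: field_simps real_sqrt_divide[symmetric] flip: real_sqrt_mult)
  ultimately show "((\<lambda>t. sqrt (F c q \<omega> (p + t *\<^sub>R axis i 1))) has_real_derivative
      1/2 * (sqrt (F c q \<omega> p) * (inverse (F c q \<omega> p) * D c q \<omega> p)) / en c p) (at 0)"
    by (simp add: mult_ac)
qed

lemma has_scaled_pderiv_en_powr:
  "has_scaled_pderiv (\<lambda>c q \<omega> p. K c q \<omega> * en c p powr e) i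
     (\<lambda>c q \<omega> p. e * (K c q \<omega> * en c p powr e) * (p $ i / en c p))"
proof (rule has_scaled_pderivI)
  fix c q \<omega> p assume r: "in_region c q \<omega> p"
  have c: "c \<noteq> 0" and P: "0 < en c p" using in_region_bounds(1)[OF r] in_region_en_pos(1)[OF r] by auto
  have "((\<lambda>t. en c (p + t *\<^sub>R axis i 1) powr e) has_real_derivative
          e * en c p powr (e - 1) * (p $ i / en c p)) (at 0)"
    using DERIV_fun_powr[OF has_real_derivative_en_line[OF c], where r = e] P by simp
  from DERIV_cmult[OF this, of "K c q \<omega>"]
  show "((\<lambda>t. K c q \<omega> * en c (p + t *\<^sub>R axis i 1) powr e) has_real_derivative
      e * (K c q \<omega> * en c p powr e) * (p $ i / en c p) / en c p) (at 0)"
    using P by (simp add: powr_diff field_simps)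
qed

lemma has_scaled_pderiv_p_nth_divide_en:
  "has_scaled_pderiv (\<lambda>c q \<omega> p. p $ j / en c p) i
     (\<lambda>c q \<omega> p. (if i = j then 1 else 0) - (p $ i / en c p) * (p $ j / en c p))"
proof (rule has_scaled_pderivI)
  fix c q \<omega> p assume r: "in_region c q \<omega> p"
  have c: "c \<noteq> 0" and P: "0 < en c p" using in_region_bounds(1)[OF r] in_region_en_pos(1)[OF r] by auto
  from DERIV_mult[OF has_real_derivative_component_line[of p i j]
      DERIV_inverse_fun[OF has_real_derivative_en_line[OF c]]] P
  show "((\<lambda>t. (p + t *\<^sub>R axis i 1) $ j / en c (p + t *\<^sub>R axis i 1)) has_real_derivative
      ((if i = j then 1 else 0) - (p $ i / en c p) * (p $ j / en c p)) / en c p) (at 0)"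
    by (simp add: divide_inverse[symmetric] field_simps power2_eq_square)
qed

text \<open>Differentiating \<open>\<chi>\<^sup>(\<^sup>k\<^sup>)(F) F\<^sup>m\<close> gives terms of the same shape; these stay bounded because
  \<open>\<chi>\<^sup>(\<^sup>k\<^sup>)(x) x\<^sup>m\<close> is bounded for \<open>x > 0\<close>.\<close>
lemma has_scaled_pderiv_cutoff:
  assumes "\<And>x. 0 < x \<Longrightarrow> (deriv ^^ k) chi differentiable (at x)"
    and "\<And>c q \<omega> p. in_region c q \<omega> p \<Longrightarrow> 0 < F c q \<omega> p"
    and "has_scaled_pderiv F i (\<lambda>c q \<omega> p. F c q \<omega> p * D c q \<omega> p)"
  shows "has_scaled_pderiv (\<lambda>c q \<omega> p. (deriv ^^ k) chi (F c q \<omega> p) * F c q \<omega> p ^ m) i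
     (\<lambda>c q \<omega> p. ((deriv ^^ Suc k) chi (F c q \<omega> p) * F c q \<omega> p ^ Suc m
                   + real m * ((deriv ^^ k) chi (F c q \<omega> p) * F c q \<omega> p ^ m)) * D c q \<omega> p)"
proof (rule has_scaled_pderivI)
  fix c q \<omega> p assume r: "in_region c q \<omega> p"
  let ?x = "F c q \<omega> p" and ?F = "\<lambda>t. F c q \<omega> (p + t *\<^sub>R axis i 1)"
  have x: "0 < ?x" using assms(2)[OF r] .
  have P: "en c p \<noteq> 0" using in_region_en_pos(1)[OF r] by simp
  have dF: "(?F has_real_derivative ?x * D c q \<omega> p / en c p) (at 0)"
    using has_scaled_pderivD[OF assms(3) r] .
  have dchi: "((deriv ^^ k) chi has_real_derivative (deriv ^^ Suc k) chi ?x) (at (?F 0))"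
    using assms(1)[OF x] by (simp add: DERIV_deriv_iff_real_differentiable)
  show "((\<lambda>t. (deriv ^^ k) chi (?F t) * ?F t ^ m) has_real_derivative
      ((deriv ^^ Suc k) chi ?x * ?x ^ Suc m + real m * ((deriv ^^ k) chi ?x * ?x ^ m))
      * D c q \<omega> p / en c p) (at 0)"
    using DERIV_mult[OF DERIV_chain2[OF dchi dF] DERIV_power[OF dF, of m]]
    by (elim DERIV_cong) (cases m; simp add: P field_simps)
qed

text \<open>Coinductive, so that derivatives of all orders are controlled at once.\<close>
coinductive symbol :: "kin_fun \<Rightarrow> bool" where
  "poly_bounded F \<Longrightarrow> (\<forall>i. \<exists>G. symbol G \<and> has_scaled_pderiv F i G) \<Longrightarrow> symbol F"

lemma symbol_poly_bounded: "symbol F \<Longrightarrow> poly_bounded F"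
  by (erule symbol.cases) auto

lemma symbol_scaled_pderiv: "symbol F \<Longrightarrow> \<exists>G. symbol G \<and> has_scaled_pderiv F i G"
  by (erule symbol.cases) auto

definition tame_cutoff :: "(real \<Rightarrow> real) \<Rightarrow> bool" where
  "tame_cutoff chi \<longleftrightarrow> (\<forall>k x. 0 < x \<longrightarrow> ((deriv ^^ k) chi) differentiable (at x)) \<and>
     (\<forall>k m. \<exists>B. \<forall>x>0. \<bar>(deriv ^^ k) chi x * x ^ m\<bar> \<le> B)"

text \<open>Closure of the symbols under these operations is proved by coinduction up to them.\<close>
inductive symbol_expr :: "kin_fun \<Rightarrow> bool" where
  symbol: "symbol F \<Longrightarrow> symbol_expr F"
| cong: "symbol F \<Longrightarrow> (\<forall>c q \<omega> p. in_region c q \<omega> p \<longrightarrow> F c q \<omega> p = G c q \<omega> p) \<Longrightarrow> symbol_expr G"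
| const: "poly_bounded (\<lambda>c q \<omega> p. k c q \<omega>) \<Longrightarrow> symbol_expr (\<lambda>c q \<omega> p. k c q \<omega>)"
| add: "symbol_expr F \<Longrightarrow> symbol_expr G \<Longrightarrow> symbol_expr (\<lambda>c q \<omega> p. F c q \<omega> p + G c q \<omega> p)"
| mult: "symbol_expr F \<Longrightarrow> symbol_expr G \<Longrightarrow> symbol_expr (\<lambda>c q \<omega> p. F c q \<omega> p * G c q \<omega> p)"
| inverse: "symbol F \<Longrightarrow> poly_lower_bounded F \<Longrightarrow> symbol_expr (\<lambda>c q \<omega> p. inverse (F c q \<omega> p))"
| sqrt: "symbol F \<Longrightarrow> poly_lower_bounded F \<Longrightarrow> symbol_expr (\<lambda>c q \<omega> p. sqrt (F c q \<omega> p))"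
| en_powr: "poly_bounded (\<lambda>c q \<omega> p. K c q \<omega> * en c p powr e) \<Longrightarrow>
    symbol_expr (\<lambda>c q \<omega> p. K c q \<omega> * en c p powr e)"
| p_nth: "symbol_expr (\<lambda>c q \<omega> p. p $ j / en c p)"
| cutoff: "tame_cutoff chi \<Longrightarrow> (\<forall>c q \<omega> p. in_region c q \<omega> p \<longrightarrow> 0 < F c q \<omega> p) \<Longrightarrow>
    (\<forall>i. \<exists>D. symbol D \<and> has_scaled_pderiv F i (\<lambda>c q \<omega> p. F c q \<omega> p * D c q \<omega> p)) \<Longrightarrow>
    symbol_expr (\<lambda>c q \<omega> p. (deriv ^^ k) chi (F c q \<omega> p) * F c q \<omega> p ^ m)"

lemma symbol_expr_num: "symbol_expr (\<lambda>c q \<omega> p. a)"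
  by (rule symbol_expr.const, rule poly_boundedI_const[of _ "\<bar>a\<bar>"]) simp

lemma abs_p_nth_divide_en_le_1: "in_region c q \<omega> p \<Longrightarrow> \<bar>p $ j / en c p\<bar> \<le> 1"
  using component_le_norm_cart[of p j] en_ge_norm[of p c] in_region_en_pos(1)
  by (simp add: abs_divide divide_le_eq_1)

lemma symbol_expr_poly_bounded: "symbol_expr F \<Longrightarrow> poly_bounded F"
proof (induction rule: symbol_expr.induct)
  case (cutoff chi F k m)
  then obtain B where "\<forall>x>0. \<bar>(deriv ^^ k) chi x * x ^ m\<bar> \<le> B" unfolding tame_cutoff_def by blast
  with cutoff.hyps(2) show ?case by (intro poly_boundedI_const[of _ B]) auto
next
  case (cong F G)
  then show ?case using poly_bounded_mono[OF symbol_poly_bounded] by simp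
next
  case (p_nth j)
  show ?case using abs_p_nth_divide_en_le_1 by (rule poly_boundedI_const)
qed (simp_all add: symbol_poly_bounded poly_bounded_add poly_bounded_mult poly_bounded_inverse
    poly_bounded_sqrt)

lemma symbol_expr_uminus: "symbol_expr F \<Longrightarrow> symbol_expr (\<lambda>c q \<omega> p. - F c q \<omega> p)"
  using symbol_expr.mult[OF symbol_expr_num[of "-1"]] by simp

lemma symbol_expr_diff:
  "symbol_expr F \<Longrightarrow> symbol_expr G \<Longrightarrow> symbol_expr (\<lambda>c q \<omega> p. F c q \<omega> p - G c q \<omega> p)"
  using symbol_expr.add[OF _ symbol_expr_uminus] by simp

lemma symbol_expr_inverse_scaled_pderiv:
  assumes "symbol F" "poly_lower_bounded F"
  shows "\<exists>G. symbol_expr G \<and> has_scaled_pderiv (\<lambda>c q \<omega> p. inverse (F c q \<omega> p)) i G"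
proof -
  obtain D where D: "symbol D" "has_scaled_pderiv F i D" using symbol_scaled_pderiv[OF assms(1)] by blast
  have "symbol_expr (\<lambda>c q \<omega> p. - (inverse (F c q \<omega> p) * (inverse (F c q \<omega> p) * D c q \<omega> p)))"
    using assms D(1)
    by (intro symbol_expr_uminus symbol_expr.mult symbol_expr.inverse symbol_expr.symbol)
  with has_scaled_pderiv_inverse[OF poly_lower_bounded_pos[OF assms(2)] D(2)] show ?thesis by blast
qed

lemma symbol_expr_sqrt_scaled_pderiv:
  assumes "symbol F" "poly_lower_bounded F"
  shows "\<exists>G. symbol_expr G \<and> has_scaled_pderiv (\<lambda>c q \<omega> p. sqrt (F c q \<omega> p)) i G"
proof -
  obtain D where D: "symbol D" "has_scaled_pderiv F i D" using symbol_scaled_pderiv[OF assms(1)] by blast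
  have "symbol_expr (\<lambda>c q \<omega> p. 1/2 * (sqrt (F c q \<omega> p) * (inverse (F c q \<omega> p) * D c q \<omega> p)))"
    using assms D(1)
    by (intro symbol_expr.mult symbol_expr_num symbol_expr.sqrt symbol_expr.inverse symbol_expr.symbol)
  with has_scaled_pderiv_sqrt[OF poly_lower_bounded_pos[OF assms(2)] D(2)] show ?thesis by blast
qed

lemma symbol_expr_cutoff_scaled_pderiv:
  assumes "tame_cutoff chi" "\<forall>c q \<omega> p. in_region c q \<omega> p \<longrightarrow> 0 < F c q \<omega> p"
    and "\<forall>i. \<exists>D. symbol D \<and> has_scaled_pderiv F i (\<lambda>c q \<omega> p. F c q \<omega> p * D c q \<omega> p)"
  shows "\<exists>G. symbol_expr G \<and>
    has_scaled_pderiv (\<lambda>c q \<omega> p. (deriv ^^ k) chi (F c q \<omega> p) * F c q \<omega> p ^ m) i G"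
proof -
  obtain D where D: "symbol D" "has_scaled_pderiv F i (\<lambda>c q \<omega> p. F c q \<omega> p * D c q \<omega> p)"
    using assms(3) by blast
  have "symbol_expr (\<lambda>c q \<omega> p. ((deriv ^^ Suc k) chi (F c q \<omega> p) * F c q \<omega> p ^ Suc m
      + real m * ((deriv ^^ k) chi (F c q \<omega> p) * F c q \<omega> p ^ m)) * D c q \<omega> p)"
    using assms D(1)
    by (intro symbol_expr.add symbol_expr.mult symbol_expr_num symbol_expr.cutoff symbol_expr.symbol)
  moreover have "has_scaled_pderiv (\<lambda>c q \<omega> p. (deriv ^^ k) chi (F c q \<omega> p) * F c q \<omega> p ^ m) i
      (\<lambda>c q \<omega> p. ((deriv ^^ Suc k) chi (F c q \<omega> p) * F c q \<omega> p ^ Suc m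
        + real m * ((deriv ^^ k) chi (F c q \<omega> p) * F c q \<omega> p ^ m)) * D c q \<omega> p)"
    using assms(1,2) unfolding tame_cutoff_def by (intro has_scaled_pderiv_cutoff[OF _ _ D(2)]) auto
  ultimately show ?thesis by blast
qed

lemma symbol_expr_scaled_pderiv: "symbol_expr F \<Longrightarrow> \<exists>G. symbol_expr G \<and> has_scaled_pderiv F i G"
proof (induction rule: symbol_expr.induct)
  case (symbol F)
  then show ?case using symbol_scaled_pderiv symbol_expr.symbol by blast
next
  case (cong F G)
  obtain F' where F': "symbol F'" "has_scaled_pderiv F i F'"
    using symbol_scaled_pderiv[OF cong.hyps(1)] by blast
  have "has_scaled_pderiv G i F'" using cong.hyps(2) by (intro has_scaled_pderiv_cong[OF F'(2)]) blast
  with symbol_expr.symbol[OF F'(1)] show ?case by blast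
next
  case (const k)
  show ?case using symbol_expr_num has_scaled_pderiv_const by blast
next
  case (add F G)
  then obtain F' G' where F': "symbol_expr F'" "has_scaled_pderiv F i F'"
    and G': "symbol_expr G'" "has_scaled_pderiv G i G'" by blast
  show ?case
    using symbol_expr.add[OF F'(1) G'(1)] has_scaled_pderiv_add[OF F'(2) G'(2)] by blast
next
  case (mult F G)
  then obtain F' G' where F': "symbol_expr F'" "has_scaled_pderiv F i F'"
    and G': "symbol_expr G'" "has_scaled_pderiv G i G'" by blast
  have "symbol_expr (\<lambda>c q \<omega> p. F' c q \<omega> p * G c q \<omega> p + F c q \<omega> p * G' c q \<omega> p)"
    using F'(1) G'(1) mult.hyps by (intro symbol_expr.add symbol_expr.mult)
  with has_scaled_pderiv_mult[OF F'(2) G'(2)] show ?case by blast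
next
  case (en_powr K e)
  have "symbol_expr (\<lambda>c q \<omega> p. e * (K c q \<omega> * en c p powr e) * (p $ i / en c p))"
    using en_powr by (intro symbol_expr.mult symbol_expr_num symbol_expr.en_powr symbol_expr.p_nth)
  with has_scaled_pderiv_en_powr show ?case by blast
next
  case (p_nth j)
  have "symbol_expr (\<lambda>c q \<omega> p. (if i = j then 1 else 0) - (p $ i / en c p) * (p $ j / en c p))"
    by (intro symbol_expr_diff symbol_expr.mult symbol_expr_num symbol_expr.p_nth)
  with has_scaled_pderiv_p_nth_divide_en show ?case by blast
qed (simp_all add: symbol_expr_inverse_scaled_pderiv symbol_expr_sqrt_scaled_pderiv
    symbol_expr_cutoff_scaled_pderiv)

lemma symbol_expr_imp_symbol: "symbol_expr F \<Longrightarrow> symbol F"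
proof (coinduction arbitrary: F rule: symbol.coinduct)
  case symbol
  then show ?case using symbol_expr_poly_bounded symbol_expr_scaled_pderiv by blast
qed

lemma symbol_cong:
  "symbol F \<Longrightarrow> (\<And>c q \<omega> p. in_region c q \<omega> p \<Longrightarrow> F c q \<omega> p = G c q \<omega> p) \<Longrightarrow> symbol G"
  by (rule symbol_expr_imp_symbol, rule symbol_expr.cong) auto

lemma symbol_const:
  "(\<And>c q \<omega> p. in_region c q \<omega> p \<Longrightarrow> \<bar>k c q \<omega>\<bar> \<le> C) \<Longrightarrow> symbol (\<lambda>c q \<omega> p. k c q \<omega>)"
  by (rule symbol_expr_imp_symbol, rule symbol_expr.const, rule poly_boundedI_const)

lemma symbol_num: "symbol (\<lambda>c q \<omega> p. a)"
  by (rule symbol_const[of _ "\<bar>a\<bar>"]) simp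

lemma symbol_add: "symbol F \<Longrightarrow> symbol G \<Longrightarrow> symbol (\<lambda>c q \<omega> p. F c q \<omega> p + G c q \<omega> p)"
  by (rule symbol_expr_imp_symbol, rule symbol_expr.add; rule symbol_expr.symbol)

lemma symbol_mult: "symbol F \<Longrightarrow> symbol G \<Longrightarrow> symbol (\<lambda>c q \<omega> p. F c q \<omega> p * G c q \<omega> p)"
  by (rule symbol_expr_imp_symbol, rule symbol_expr.mult; rule symbol_expr.symbol)

lemma symbol_inverse:
  "symbol F \<Longrightarrow> poly_lower_bounded F \<Longrightarrow> symbol (\<lambda>c q \<omega> p. inverse (F c q \<omega> p))"
  by (rule symbol_expr_imp_symbol, rule symbol_expr.inverse)

lemma symbol_sqrt:
  "symbol F \<Longrightarrow> poly_lower_bounded F \<Longrightarrow> symbol (\<lambda>c q \<omega> p. sqrt (F c q \<omega> p))"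
  by (rule symbol_expr_imp_symbol, rule symbol_expr.sqrt)

lemma symbol_en_powr:
  "(\<And>c q \<omega> p. in_region c q \<omega> p \<Longrightarrow> \<bar>K c q \<omega> * en c p powr e\<bar> \<le> C) \<Longrightarrow>
    symbol (\<lambda>c q \<omega> p. K c q \<omega> * en c p powr e)"
  by (rule symbol_expr_imp_symbol, rule symbol_expr.en_powr, rule poly_boundedI_const)

lemma symbol_p_nth_divide_en: "symbol (\<lambda>c q \<omega> p. p $ j / en c p)"
  by (rule symbol_expr_imp_symbol, rule symbol_expr.p_nth)

lemma symbol_cutoff:
  "tame_cutoff chi \<Longrightarrow> (\<And>c q \<omega> p. in_region c q \<omega> p \<Longrightarrow> 0 < F c q \<omega> p) \<Longrightarrow>
    (\<And>i. \<exists>D. symbol D \<and> has_scaled_pderiv F i (\<lambda>c q \<omega> p. F c q \<omega> p * D c q \<omega> p)) \<Longrightarrow>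
    symbol (\<lambda>c q \<omega> p. chi (F c q \<omega> p))"
  using symbol_expr_imp_symbol[OF symbol_expr.cutoff[of chi F 0 0]] by simp

lemma symbol_diff: "symbol F \<Longrightarrow> symbol G \<Longrightarrow> symbol (\<lambda>c q \<omega> p. F c q \<omega> p - G c q \<omega> p)"
  using symbol_add[OF _ symbol_mult[OF symbol_num[of "-1"]], of F G] by simp

lemma symbol_sum: "(\<And>j. symbol (F j)) \<Longrightarrow> symbol (\<lambda>c q \<omega> p. \<Sum>j\<in>I. F j c q \<omega> p)"
  by (induction I rule: infinite_finite_induct) (simp_all add: symbol_num symbol_add)

lemma symbol_divide_en: "symbol F \<Longrightarrow> symbol (\<lambda>c q \<omega> p. F c q \<omega> p / en c p)"
proof -
  assume F: "symbol F"
  have "symbol (\<lambda>c q \<omega> p. 1 * en c p powr -1)"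
  proof (rule symbol_en_powr[of _ _ 1])
    fix c q \<omega> p assume r: "in_region c q \<omega> p"
    show "\<bar>1 * en c p powr -1\<bar> \<le> 1"
      using in_region_bounds(1,6)[OF r] in_region_en_pos(1)[OF r] by (simp add: powr_neg_one)
  qed
  from symbol_mult[OF F this] show ?thesis
    by (rule symbol_cong) (simp add: powr_neg_one in_region_en_pos(1) less_imp_le divide_inverse)
qed

section \<open>Iterated derivatives\<close>

text \<open>The factor \<open>K\<close> is constant in \<open>p\<close>; for \<open>v\<^sub>\<phi>\<close> it is \<open>c\<close>, which is not bounded in terms of \<open>\<langle>q\<rangle>\<close>.\<close>
definition symbol_multiple :: "(real \<Rightarrow> vec3 \<Rightarrow> vec3 \<Rightarrow> real) \<Rightarrow> kin_fun \<Rightarrow> bool" where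
  "symbol_multiple K f \<longleftrightarrow>
     (\<exists>F. symbol F \<and> (\<forall>c q \<omega> p. in_region c q \<omega> p \<longrightarrow> f c q \<omega> p = K c q \<omega> * F c q \<omega> p))"

lemma symbol_multiple_pdiff:
  assumes "symbol_multiple K f"
  shows "symbol_multiple K (\<lambda>c q \<omega>. pdiff i (f c q \<omega>))"
proof -
  obtain F where F: "symbol F" "\<And>c q \<omega> p. in_region c q \<omega> p \<Longrightarrow> f c q \<omega> p = K c q \<omega> * F c q \<omega> p"
    using assms unfolding symbol_multiple_def by blast
  obtain G where G: "symbol G" "has_scaled_pderiv F i G" using symbol_scaled_pderiv[OF F(1)] by blast
  have "pdiff i (f c q \<omega>) p = K c q \<omega> * (G c q \<omega> p / en c p)" if r: "in_region c q \<omega> p" for c q \<omega> p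
  proof -
    obtain U where U: "open U" "p \<in> U" "\<And>x. x \<in> U \<Longrightarrow> in_region c q \<omega> x"
      using r by (meson in_region_nhd)
    show ?thesis
      using U DERIV_cmult[OF has_scaled_pderivD[OF G(2) r], of "K c q \<omega>"] F(2)
      by (intro pdiff_eqI[where g = "\<lambda>p. K c q \<omega> * F c q \<omega> p"])
         (auto simp: has_real_derivative_iff_has_vector_derivative)
  qed
  with symbol_divide_en[OF G(1)] show ?thesis unfolding symbol_multiple_def by blast
qed

lemma symbol_multiple_pdiffs:
  "symbol_multiple K f \<Longrightarrow> symbol_multiple K (\<lambda>c q \<omega>. pdiffs \<beta> (f c q \<omega>))"
proof -
  have pow: "symbol_multiple K (\<lambda>c q \<omega>. (pdiff i ^^ k) (g c q \<omega>))" if "symbol_multiple K g" for i k g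
    using that by (induction k) (simp_all add: symbol_multiple_pdiff)
  show "symbol_multiple K f \<Longrightarrow> ?thesis" unfolding pdiffs_def by (intro pow)
qed

text \<open>The post-collision momenta grow like \<open>p\<^sup>0\<close>: they are only affine vector symbols, but their
  derivatives are vector symbols.\<close>
definition vec_symbol :: "(real \<Rightarrow> vec3 \<Rightarrow> vec3 \<Rightarrow> vec3 \<Rightarrow> vec3) \<Rightarrow> bool" where
  "vec_symbol f \<longleftrightarrow> (\<forall>j. symbol (\<lambda>c q \<omega> p. f c q \<omega> p $ j))"

definition affine_vec_symbol :: "(real \<Rightarrow> vec3 \<Rightarrow> vec3 \<Rightarrow> vec3 \<Rightarrow> vec3) \<Rightarrow> bool" where
  "affine_vec_symbol f \<longleftrightarrow> (\<exists>K Z. vec_symbol Z \<and>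
     (\<forall>c q \<omega> p. in_region c q \<omega> p \<longrightarrow> f c q \<omega> p = K c q \<omega> + en c p *\<^sub>R Z c q \<omega> p))"

lemma vec_symbol_pdiff:
  assumes "vec_symbol f"
  shows "vec_symbol (\<lambda>c q \<omega>. pdiff i (f c q \<omega>))"
proof -
  have "\<forall>j. \<exists>G. symbol G \<and> has_scaled_pderiv (\<lambda>c q \<omega> p. f c q \<omega> p $ j) i G"
    using assms symbol_scaled_pderiv unfolding vec_symbol_def by blast
  then obtain G where G: "\<And>j. symbol (G j)" "\<And>j. has_scaled_pderiv (\<lambda>c q \<omega> p. f c q \<omega> p $ j) i (G j)"
    by metis
  have eq: "pdiff i (f c q \<omega>) p $ j = G j c q \<omega> p / en c p" if r: "in_region c q \<omega> p" for c q \<omega> p j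
  proof -
    have "((\<lambda>t. f c q \<omega> (p + t *\<^sub>R axis i 1)) has_vector_derivative (\<chi> j. G j c q \<omega> p / en c p)) (at 0)"
      using has_scaled_pderivD[OF G(2) r] by (rule has_vector_derivative_vec_lambda)
    hence "pdiff i (f c q \<omega>) p = (\<chi> j. G j c q \<omega> p / en c p)" by (intro pdiff_eqI[of UNIV]) auto
    thus ?thesis by simp
  qed
  have "symbol (\<lambda>c q \<omega> p. pdiff i (f c q \<omega>) p $ j)" for j
    by (rule symbol_cong[OF symbol_divide_en[OF G(1)[of j]]]) (simp add: eq)
  thus ?thesis unfolding vec_symbol_def by blast
qed

lemma affine_vec_symbol_pdiff:
  assumes "affine_vec_symbol f"
  shows "vec_symbol (\<lambda>c q \<omega>. pdiff i (f c q \<omega>))"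
proof -
  obtain K Z where Z: "vec_symbol Z"
    "\<And>c q \<omega> p. in_region c q \<omega> p \<Longrightarrow> f c q \<omega> p = K c q \<omega> + en c p *\<^sub>R Z c q \<omega> p"
    using assms unfolding affine_vec_symbol_def by blast
  have "\<forall>j. \<exists>G. symbol G \<and> has_scaled_pderiv (\<lambda>c q \<omega> p. Z c q \<omega> p $ j) i G"
    using Z(1) symbol_scaled_pderiv unfolding vec_symbol_def by blast
  then obtain G where G: "\<And>j. symbol (G j)" "\<And>j. has_scaled_pderiv (\<lambda>c q \<omega> p. Z c q \<omega> p $ j) i (G j)"
    by metis
  have eq: "pdiff i (f c q \<omega>) p $ j = p $ i / en c p * Z c q \<omega> p $ j + G j c q \<omega> p"
    if r: "in_region c q \<omega> p" for c q \<omega> p j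
  proof -
    obtain U where U: "open U" "p \<in> U" "\<And>x. x \<in> U \<Longrightarrow> in_region c q \<omega> x"
      using r by (meson in_region_nhd)
    have c: "c \<noteq> 0" and P: "en c p \<noteq> 0"
      using in_region_bounds(1)[OF r] in_region_en_pos(1)[OF r] by auto
    have "((\<lambda>t. K c q \<omega> + en c (p + t *\<^sub>R axis i 1) *\<^sub>R Z c q \<omega> (p + t *\<^sub>R axis i 1))
        has_vector_derivative (\<chi> j. p $ i / en c p * Z c q \<omega> p $ j + G j c q \<omega> p)) (at 0)"
    proof (rule has_vector_derivative_vec_lambda)
      fix j
      show "((\<lambda>t. (K c q \<omega> + en c (p + t *\<^sub>R axis i 1) *\<^sub>R Z c q \<omega> (p + t *\<^sub>R axis i 1)) $ j)
          has_real_derivative p $ i / en c p * Z c q \<omega> p $ j + G j c q \<omega> p) (at 0)"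
        using DERIV_add[OF DERIV_const[of "K c q \<omega> $ j"]
            DERIV_mult[OF has_real_derivative_en_line[OF c, of p i] has_scaled_pderivD[OF G(2) r]]] P
        by simp
    qed
    hence "pdiff i (f c q \<omega>) p = (\<chi> j. p $ i / en c p * Z c q \<omega> p $ j + G j c q \<omega> p)"
      using U Z(2) by (intro pdiff_eqI[of U]) auto
    thus ?thesis by simp
  qed
  have "symbol (\<lambda>c q \<omega> p. p $ i / en c p * Z c q \<omega> p $ j + G j c q \<omega> p)" for j
    using Z(1) G(1) unfolding vec_symbol_def
    by (intro symbol_add symbol_mult symbol_p_nth_divide_en) auto
  hence "symbol (\<lambda>c q \<omega> p. pdiff i (f c q \<omega>) p $ j)" for j
    by (rule symbol_cong) (simp add: eq)
  thus ?thesis unfolding vec_symbol_def by blast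
qed

lemma vec_symbol_pdiffs: "vec_symbol f \<Longrightarrow> vec_symbol (\<lambda>c q \<omega>. pdiffs \<beta> (f c q \<omega>))"
proof -
  have pow: "vec_symbol (\<lambda>c q \<omega>. (pdiff i ^^ k) (g c q \<omega>))" if "vec_symbol g" for i k g
    using that by (induction k) (simp_all add: vec_symbol_pdiff)
  show "vec_symbol f \<Longrightarrow> ?thesis" unfolding pdiffs_def by (intro pow)
qed

lemma pdiffs_eq_pdiffs_pdiff:
  assumes "\<beta> \<noteq> (\<lambda>_. 0)"
  obtains i \<beta>' where "\<And>f :: vec3 \<Rightarrow> 'a::real_normed_vector. pdiffs \<beta> f = pdiffs \<beta>' (pdiff i f)"
proof -
  have "\<beta> 3 \<noteq> 0 \<or> \<beta> 2 \<noteq> 0 \<or> \<beta> 1 \<noteq> 0"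
  proof (rule ccontr)
    assume "\<not> ?thesis"
    hence "\<beta> x = 0" for x :: 3 using exhaust_3[of x] by auto
    with assms show False by auto
  qed
  then consider n where "\<beta> 3 = Suc n" | n where "\<beta> 3 = 0" "\<beta> 2 = Suc n"
    | n where "\<beta> 3 = 0" "\<beta> 2 = 0" "\<beta> 1 = Suc n"
    by (metis not0_implies_Suc)
  thus thesis
  proof cases
    case (1 n)
    show thesis
      by (rule that[of "\<beta>(3 := n)" 3]) (simp add: pdiffs_def 1 funpow_Suc_right del: funpow.simps)
  next
    case (2 n)
    show thesis
      by (rule that[of "\<beta>(2 := n)" 2]) (simp add: pdiffs_def 2 funpow_Suc_right del: funpow.simps)
  next
    case (3 n)
    show thesis
      by (rule that[of "\<beta>(1 := n)" 1]) (simp add: pdiffs_def 3 funpow_Suc_right del: funpow.simps)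
  qed
qed

lemma affine_vec_symbol_pdiffs:
  assumes "affine_vec_symbol f" "\<beta> \<noteq> (\<lambda>_. 0)"
  shows "vec_symbol (\<lambda>c q \<omega>. pdiffs \<beta> (f c q \<omega>))"
proof -
  obtain i \<beta>' where "\<And>f :: vec3 \<Rightarrow> vec3. pdiffs \<beta> f = pdiffs \<beta>' (pdiff i f)"
    using pdiffs_eq_pdiffs_pdiff[OF assms(2)] by metis
  thus ?thesis using vec_symbol_pdiffs[OF affine_vec_symbol_pdiff[OF assms(1)]] by simp
qed

section \<open>The cutoff and the kinematic quantities\<close>

lemma funpow_deriv_const_on_open:
  fixes f :: "real \<Rightarrow> real"
  assumes "open S" "\<And>y. y \<in> S \<Longrightarrow> f y = a" "x \<in> S"
  shows "(deriv ^^ k) f x = (if k = 0 then a else 0)"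
  using assms(3)
proof (induction k arbitrary: x)
  case (Suc k)
  have "((deriv ^^ k) f has_real_derivative 0) (at x)"
    by (rule has_field_derivative_transform_within_open[OF DERIV_const assms(1) Suc.prems])
       (use Suc.IH in simp)
  thus ?case by (simp add: DERIV_imp_deriv)
qed (use assms(2) in simp)

lemma tame_cutoffI:
  fixes chi :: "real \<Rightarrow> real"
  assumes smooth: "\<forall>k x. x > 0 \<longrightarrow> ((deriv ^^ k) chi) differentiable (at x)"
    and one: "\<forall>r. 0 \<le> r \<and> r \<le> 1 \<longrightarrow> chi r = 1"
    and zero: "\<forall>r>2. chi r = 0"
  shows "tame_cutoff chi"
proof -
  have low: "(deriv ^^ k) chi x = (if k = 0 then 1 else 0)" if "0 < x" "x < 1" for k x
    using one that by (intro funpow_deriv_const_on_open[of "{0<..<1}"]) auto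
  have high: "(deriv ^^ k) chi x = 0" if "2 < x" for k x
    using zero that funpow_deriv_const_on_open[of "{2<..}" chi 0 x k] by auto
  have "\<exists>B. \<forall>x>0. \<bar>(deriv ^^ k) chi x * x ^ m\<bar> \<le> B" for k m
  proof -
    let ?f = "\<lambda>x. (deriv ^^ k) chi x * x ^ m"
    have "continuous_on {1..2} ?f"
      using smooth by (intro continuous_intros continuous_at_imp_continuous_on ballI
          differentiable_imp_continuous_within) auto
    then obtain B where B: "\<And>x. x \<in> {1..2} \<Longrightarrow> \<bar>?f x\<bar> \<le> B"
      using compact_continuous_image[of "{1..2}" ?f]
      by (force dest: compact_imp_bounded simp: bounded_iff)
    have "\<bar>?f x\<bar> \<le> max 1 B" if "0 < x" for x
    proof -
      consider "x < 1" | "x \<in> {1..2}" | "2 < x" by force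
      thus ?thesis
      proof cases
        case 1
        hence "x ^ m \<le> 1" using \<open>0 < x\<close> by (simp add: power_le_one)
        with 1 \<open>0 < x\<close> show ?thesis using low[of x k] by auto
      qed (use B high in \<open>force+\<close>)
    qed
    thus ?thesis by blast
  qed
  with smooth show ?thesis unfolding tame_cutoff_def by blast
qed

lemma mass_shell_gap_identity:
  fixes c x y P Q :: real
  assumes "P^2 = c^2 + x^2" "Q^2 = c^2 + y^2"
  shows "(P*Q - x*y - c^2) * (P*Q - x*y + c^2) = (x*Q - y*P)^2"
  using assms by algebra

lemma mass_shell_product_ge:
  fixes c x y P Q :: real
  assumes "P^2 = c^2 + x^2" "Q^2 = c^2 + y^2" "0 \<le> P" "0 \<le> Q"
  shows "x*y + c^2 \<le> P*Q"
proof (rule power2_le_imp_le)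
  have "(P*Q)^2 - (x*y + c^2)^2 = c^2 * (x - y)^2" using assms(1,2) by algebra
  thus "(x*y + c^2)^2 \<le> (P*Q)^2" by (metis diff_ge_0_iff_ge zero_le_mult_iff zero_le_power2)
qed (use assms(3,4) in simp)

lemma cross_difference_lower_bound:
  fixes c x y P Q :: real
  assumes P: "P^2 = c^2 + x^2" "0 \<le> P" and Q: "Q^2 = c^2 + y^2" "0 < Q"
    and y: "0 \<le> y" and x: "4/3 * Q < x"
  shows "7/36 * (c^2 * x / Q) \<le> x*Q - y*P"
proof -
  have yQ: "y \<le> Q" by (rule power2_le_imp_le) (use Q in auto)
  have "P^2 \<le> (5/4 * x)^2"
  proof -
    have "c^2 \<le> Q^2" using Q by simp
    moreover have "Q^2 \<le> (3/4 * x)^2" using x Q by (intro power_mono) auto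
    ultimately show ?thesis using P by (simp add: power2_eq_square)
  qed
  hence P54: "P \<le> 5/4 * x" by (rule power2_le_imp_le) (use x Q in auto)
  have sum_pos: "0 < x*Q + y*P" using x Q y P by (simp add: add_pos_nonneg)
  have "y*P \<le> Q * (5/4 * x)" using yQ P54 y P(2) by (intro mult_mono) auto
  hence sum_le: "x*Q + y*P \<le> 9/4 * (x*Q)" by simp
  have "y^2 \<le> (3/4 * x)^2" using yQ x y by (intro power_mono) auto
  hence diff_ge: "7/16 * x^2 \<le> x^2 - y^2" by (simp add: power2_eq_square)
  have "0 \<le> x^2 - y^2" using diff_ge zero_le_power2[of x] by linarith
  hence diff_nonneg: "0 \<le> c^2 * (x^2 - y^2)" by simp
  have "(x*Q - y*P) * (x*Q + y*P) = c^2 * (x^2 - y^2)"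
    using P Q by (simp add: algebra_simps power2_eq_square) algebra
  hence "x*Q - y*P = c^2 * (x^2 - y^2) / (x*Q + y*P)" using sum_pos by (simp add: eq_divide_eq)
  also have "\<dots> \<ge> c^2 * (7/16 * x^2) / (9/4 * (x*Q))"
    using sum_le sum_pos diff_ge diff_nonneg by (intro frac_le mult_left_mono) auto
  also have "c^2 * (7/16 * x^2) / (9/4 * (x*Q)) = 7/36 * (c^2 * x / Q)"
    using x Q by (simp add: field_simps power2_eq_square)
  finally show ?thesis .
qed

text \<open>With \<open>P = p\<^sup>0\<close>, \<open>Q = q\<^sup>0\<close>, \<open>x = |p|\<close>, \<open>y = |q|\<close> and \<open>p \<cdot> q \<le> x y\<close>, this bounds
  \<open>g\<^sup>2/(p\<^sup>0q\<^sup>0)\<close> from below.\<close>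
lemma mass_shell_gap_lower_bound:
  fixes c x y P Q :: real
  assumes c: "0 < c" and P: "P^2 = c^2 + x^2" "0 \<le> P" and Q: "Q^2 = c^2 + y^2" "0 \<le> Q"
    and y: "0 \<le> y" and x: "4/3 * Q < x"
  shows "1/100 * (c^4 / Q^4) \<le> 2 * (P*Q - x*y - c^2) / (P*Q)"
proof -
  define X where "X = P*Q - x*y - c^2"
  have cQ: "c \<le> Q" and cP: "c \<le> P" by (rule power2_le_imp_le; use P Q c in simp)+
  hence Q0: "0 < Q" and P0: "0 < P" and x0: "0 \<le> x" using c x by linarith+
  have c2_le: "c^2 \<le> P*Q" using cP cQ c by (simp add: power2_eq_square mult_mono)
  have xy_le: "x*y + c^2 \<le> P*Q" using mass_shell_product_ge[OF P(1) Q(1)] P0 Q0 by simp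
  have X0: "0 \<le> X" using xy_le unfolding X_def by linarith
  have X_le: "X + 2 * c^2 \<le> 3 * (P*Q)"
    using c2_le xy_le mult_nonneg_nonneg[OF x0 y] zero_le_power2[of c] unfolding X_def by linarith
  have "(7/36 * (c^2 * x / Q))^2 \<le> (x*Q - y*P)^2"
    using cross_difference_lower_bound[OF P Q(1) Q0 y x] x0 Q0 by (intro power_mono) auto
  also have "\<dots> = X * (X + 2 * c^2)"
    unfolding X_def using mass_shell_gap_identity[OF P(1) Q(1)] by (simp add: algebra_simps)
  also have "\<dots> \<le> X * (3 * (P*Q))" using X_le X0 by (rule mult_left_mono)
  finally have X_lower: "49/1296 * (c^4 * x^2 / Q^2) \<le> X * (3 * (P*Q))"
    by (simp add: power2_eq_square power4_eq_xxxx field_simps)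
  have "P^2 \<le> 25/16 * x^2"
  proof -
    have "c^2 \<le> Q^2" using Q by simp
    moreover have "Q^2 \<le> (3/4 * x)^2" using x Q0 by (intro power_mono) auto
    ultimately show ?thesis using P by (simp add: power2_eq_square)
  qed
  hence "3/100 * (c^4 / Q^2) * P^2 \<le> 3/100 * (c^4 / Q^2) * (25/16 * x^2)"
    by (intro mult_left_mono) auto
  also have "\<dots> = 3/64 * (c^4 * x^2 / Q^2)" by (simp add: field_simps)
  also have "\<dots> \<le> 49/648 * (c^4 * x^2 / Q^2)" by (intro mult_right_mono) auto
  also have "\<dots> = 2 * (49/1296 * (c^4 * x^2 / Q^2))" by simp
  also have "\<dots> \<le> 2 * X * (3 * (P*Q))" using X_lower by linarith
  finally have "1/100 * (c^4 / Q^4) * (P*Q) * (3 * (P*Q)) \<le> 2 * X * (3 * (P*Q))"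
    using Q0 by (simp add: field_simps power2_eq_square power4_eq_xxxx)
  hence "1/100 * (c^4 / Q^4) * (P*Q) \<le> 2 * X"
    by (rule mult_right_le_imp_le) (use P0 Q0 in simp)
  thus ?thesis unfolding X_def using P0 Q0 by (simp add: le_divide_eq)
qed

lemma symbol_divide_en_bounded:
  assumes "\<And>c q \<omega> p. in_region c q \<omega> p \<Longrightarrow> \<bar>K c q \<omega>\<bar> \<le> en c p"
  shows "symbol (\<lambda>c q \<omega> p. K c q \<omega> / en c p)"
proof (rule symbol_cong[OF symbol_en_powr[where e = "-1" and C = 1]])
  fix c q \<omega> p assume r: "in_region c q \<omega> p"
  show "\<bar>K c q \<omega> * en c p powr -1\<bar> \<le> 1"
    using assms[OF r] in_region_en_pos(1)[OF r] by (simp add: powr_neg_one abs_divide)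
  show "K c q \<omega> * en c p powr -1 = K c q \<omega> / en c p"
    using in_region_en_pos(1)[OF r] by (simp add: powr_neg_one divide_inverse)
qed

lemma symbol_q_nth_divide_en: "symbol (\<lambda>c q \<omega> p. q $ k / en c p)"
proof (rule symbol_divide_en_bounded)
  fix c q \<omega> p assume r: "in_region c q \<omega> p"
  show "\<bar>q $ k\<bar> \<le> en c p" using component_le_norm_cart[of q k] in_region_bounds(5,9)[OF r] by linarith
qed

lemma symbol_c_divide_en: "symbol (\<lambda>c q \<omega> p. c / en c p)"
proof (rule symbol_divide_en_bounded)
  fix c q \<omega> p assume r: "in_region c q \<omega> p"
  show "\<bar>c\<bar> \<le> en c p" by (rule en_ge_abs)
qed

lemma symbol_en_q_divide_en_p: "symbol (\<lambda>c q \<omega> p. en c q / en c p)"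
proof (rule symbol_divide_en_bounded)
  fix c q \<omega> p assume r: "in_region c q \<omega> p"
  show "\<bar>en c q\<bar> \<le> en c p" using in_region_bounds(9)[OF r] in_region_en_pos(2)[OF r] by simp
qed

lemma symbol_sqrt_en_q_divide_sqrt_en_p: "symbol (\<lambda>c q \<omega> p. sqrt (en c q) / sqrt (en c p))"
proof (rule symbol_cong[OF symbol_en_powr[where e = "-1/2" and C = 1 and K = "\<lambda>c q \<omega>. sqrt (en c q)"]])
  fix c q \<omega> p assume r: "in_region c q \<omega> p"
  have e: "en c p powr (-1/2) = 1 / sqrt (en c p)"
    using in_region_en_pos(1)[OF r] by (simp add: powr_minus_divide powr_half_sqrt)
  show "sqrt (en c q) * en c p powr (-1/2) = sqrt (en c q) / sqrt (en c p)" unfolding e by simp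
  show "\<bar>sqrt (en c q) * en c p powr (-1/2)\<bar> \<le> 1"
    unfolding e using in_region_bounds(9)[OF r] in_region_en_pos[OF r] by simp
qed

lemma symbol_q_nth_divide_en_q: "symbol (\<lambda>c q \<omega> p. q $ k / en c q)"
proof (rule symbol_const[of _ 1])
  fix c q \<omega> p assume r: "in_region c q \<omega> p"
  show "\<bar>q $ k / en c q\<bar> \<le> 1"
    using component_le_norm_cart[of q k] in_region_bounds(5)[OF r] in_region_en_pos(2)[OF r]
    by (simp add: abs_divide)
qed

lemma symbol_c_divide_en_q: "symbol (\<lambda>c q \<omega> p. c / en c q)"
proof (rule symbol_const[of _ 1])
  fix c q \<omega> p assume r: "in_region c q \<omega> p"
  show "\<bar>c / en c q\<bar> \<le> 1" using in_region_bounds(1,4)[OF r] by simp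
qed

lemma symbol_omega_nth: "symbol (\<lambda>c q \<omega> p. \<omega> $ k)"
  by (rule symbol_const[of _ 1]) (metis component_le_norm_cart in_region_bounds(2))

text \<open>Unlike \<open>g\<close> and \<open>s\<close>, the ratios \<open>g\<^sup>2/(p\<^sup>0q\<^sup>0)\<close> and \<open>s/(p\<^sup>0q\<^sup>0)\<close> are symbols.\<close>
definition g_sq_ratio :: kin_fun where
  "g_sq_ratio c q \<omega> p = 2 * (en c p * en c q - p \<bullet> q - c^2) / (en c p * en c q)"

definition s_ratio :: kin_fun where
  "s_ratio c q \<omega> p = 2 * (en c p * en c q - p \<bullet> q + c^2) / (en c p * en c q)"

lemma inner_vec3_sum: "(a::vec3) \<bullet> b = (\<Sum>j\<in>UNIV. a $ j * b $ j)"
  by (simp add: inner_vec_def)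

lemma symbol_g_sq_ratio: "symbol g_sq_ratio"
proof (rule symbol_cong)
  show "symbol (\<lambda>c q \<omega> p. 2 - 2 * (\<Sum>j\<in>UNIV. (p $ j / en c p) * (q $ j / en c q))
      - 2 * ((c / en c p) * (c / en c q)))"
    by (intro symbol_diff symbol_mult symbol_num symbol_sum symbol_p_nth_divide_en
        symbol_q_nth_divide_en_q
        symbol_c_divide_en symbol_c_divide_en_q)
  fix c q \<omega> p assume r: "in_region c q \<omega> p"
  have "(\<Sum>j\<in>UNIV. (p $ j / en c p) * (q $ j / en c q)) = (p \<bullet> q) / (en c p * en c q)"
    unfolding inner_vec3_sum sum_divide_distrib by simp
  thus "2 - 2 * (\<Sum>j\<in>UNIV. (p $ j / en c p) * (q $ j / en c q)) - 2 * ((c / en c p) * (c / en c q))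
      = g_sq_ratio c q \<omega> p"
    unfolding g_sq_ratio_def using in_region_en_pos[OF r] by (simp add: field_simps power2_eq_square)
qed

lemma symbol_s_ratio: "symbol s_ratio"
proof (rule symbol_cong)
  show "symbol (\<lambda>c q \<omega> p. g_sq_ratio c q \<omega> p + 4 * ((c / en c p) * (c / en c q)))"
    by (intro symbol_add symbol_mult symbol_num symbol_g_sq_ratio symbol_c_divide_en
        symbol_c_divide_en_q)
  fix c q \<omega> p assume r: "in_region c q \<omega> p"
  show "g_sq_ratio c q \<omega> p + 4 * ((c / en c p) * (c / en c q)) = s_ratio c q \<omega> p"
    unfolding g_sq_ratio_def s_ratio_def using in_region_en_pos[OF r]
    by (simp add: field_simps power2_eq_square)
qed

lemma g_sq_ratio_lower_bound:
  assumes r: "in_region c q \<omega> p"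
  shows "1/100 / jbr q ^ 4 \<le> g_sq_ratio c q \<omega> p"
proof -
  note R = in_region_bounds[OF r] in_region_en_pos[OF r]
  have "1/100 * (1 / jbr q ^ 4) \<le> 1/100 * (c^4 / en c q ^ 4)"
  proof -
    have "en c q ^ 4 \<le> (c * jbr q) ^ 4" using R by (intro power_mono) auto
    hence "1 / (c * jbr q) ^ 4 \<le> 1 / en c q ^ 4"
      using R jbr_ge_1[of q] by (intro divide_left_mono mult_pos_pos) auto
    hence "1 / (c * jbr q) ^ 4 * c ^ 4 \<le> 1 / en c q ^ 4 * c ^ 4" by (rule mult_right_mono) simp
    thus ?thesis using R by (simp add: power_mult_distrib)
  qed
  also have "\<dots> \<le> 2 * (en c p * en c q - norm p * norm q - c^2) / (en c p * en c q)"
    using R by (intro mass_shell_gap_lower_bound) (auto simp: en_squared)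
  also have "\<dots> \<le> g_sq_ratio c q \<omega> p"
    unfolding g_sq_ratio_def using R norm_cauchy_schwarz[of p q] by (intro divide_right_mono) auto
  finally show ?thesis by simp
qed

lemma poly_lower_bounded_g_sq_ratio: "poly_lower_bounded g_sq_ratio"
  unfolding poly_lower_bounded_def using g_sq_ratio_lower_bound
  by (intro exI[of _ "1/100"] conjI exI[of _ 4]) auto

lemma poly_lower_bounded_s_ratio: "poly_lower_bounded s_ratio"
proof (rule poly_lower_bounded_mono[OF poly_lower_bounded_g_sq_ratio])
  fix c q \<omega> p assume r: "in_region c q \<omega> p"
  show "g_sq_ratio c q \<omega> p \<le> s_ratio c q \<omega> p"
    unfolding g_sq_ratio_def s_ratio_def using in_region_en_pos[OF r] by (intro divide_right_mono) auto
qed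

lemma ggg_eq_g_sq_ratio: "in_region c q \<omega> p \<Longrightarrow> ggg c p q = sqrt (g_sq_ratio c q \<omega> p * (en c p * en c q))"
  unfolding ggg_def g_sq_ratio_def by (simp add: in_region_en_pos less_imp_neq[symmetric])

lemma sss_eq_s_ratio: "in_region c q \<omega> p \<Longrightarrow> sss c p q = s_ratio c q \<omega> p * (en c p * en c q)"
  unfolding sss_def s_ratio_def by (simp add: in_region_en_pos less_imp_neq[symmetric])

lemma vphi_eq:
  assumes r: "in_region c q \<omega> p"
  shows "vphi c p q = c * (1/4 * (sqrt (g_sq_ratio c q \<omega> p) * sqrt (s_ratio c q \<omega> p)))"
proof -
  let ?g = "sqrt (g_sq_ratio c q \<omega> p)" and ?s = "sqrt (s_ratio c q \<omega> p)"
    and ?X = "sqrt (en c p * en c q)"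
  have PQ: "0 < en c p * en c q" using in_region_en_pos[OF r] by simp
  hence "?g * ?X * (?s * ?X) = ?g * ?s * (en c p * en c q)" by (simp add: mult_ac)
  thus ?thesis unfolding vphi_def ggg_eq_g_sq_ratio[OF r] sss_eq_s_ratio[OF r]
      real_sqrt_mult[of "g_sq_ratio c q \<omega> p"] real_sqrt_mult[of "s_ratio c q \<omega> p"]
    using in_region_en_pos[OF r] by (simp add: field_simps)
qed

lemma symbol_norm_sq_ratio: "symbol (\<lambda>c q \<omega> p. norm p ^ 2 / en c p ^ 2)"
proof (rule symbol_cong)
  show "symbol (\<lambda>c q \<omega> p. \<Sum>j\<in>UNIV. (p $ j / en c p) * (p $ j / en c p))"
    by (intro symbol_sum symbol_mult symbol_p_nth_divide_en)
  fix c q \<omega> p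
  show "(\<Sum>j\<in>UNIV. (p $ j / en c p) * (p $ j / en c p)) = norm p ^ 2 / en c p ^ 2"
    by (simp add: inner_vec3_sum[symmetric] sum_divide_distrib[symmetric] dot_square_norm
        power2_eq_square)
qed

lemma poly_lower_bounded_norm_sq_ratio: "poly_lower_bounded (\<lambda>c q \<omega> p. norm p ^ 2 / en c p ^ 2)"
  unfolding poly_lower_bounded_def
proof (intro exI[of _ "16/25"] conjI exI[of _ 0] allI impI)
  fix c q \<omega> p assume r: "in_region c q \<omega> p"
  have "(4/5 * en c p)^2 \<le> norm p ^ 2" using in_region_bounds[OF r] by (intro power_mono) auto
  thus "16/25 / jbr q ^ 0 \<le> norm p ^ 2 / en c p ^ 2"
    using in_region_en_pos(1)[OF r] by (simp add: field_simps power2_eq_square)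
qed simp

lemma symbol_cutoff_en_divide_c:
  assumes "tame_cutoff chi"
  shows "symbol (\<lambda>c q \<omega> p. chi (en c p / c))"
proof (rule symbol_cutoff[OF assms])
  fix i
  have "has_scaled_pderiv (\<lambda>c q \<omega> p. en c p / c) i (\<lambda>c q \<omega> p. en c p / c * (p $ i / en c p))"
  proof (rule has_scaled_pderivI)
    fix c q \<omega> p assume r: "in_region c q \<omega> p"
    have c0: "c \<noteq> 0" using in_region_bounds(1)[OF r] by simp
    from DERIV_cdivide[OF has_real_derivative_en_line[OF c0, of p i], where c = c]
    show "((\<lambda>t. en c (p + t *\<^sub>R axis i 1) / c) has_real_derivative
        en c p / c * (p $ i / en c p) / en c p) (at 0)"
      using in_region_en_pos(1)[OF r] by (simp add: mult.commute)
  qed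
  thus "\<exists>D. symbol D \<and> has_scaled_pderiv (\<lambda>c q \<omega> p. en c p / c) i
      (\<lambda>c q \<omega> p. en c p / c * D c q \<omega> p)"
    using symbol_p_nth_divide_en by blast
qed (use in_region_bounds(1) in_region_en_pos(1) in force)

lemma symbol_cutoff_norm_divide_en:
  assumes "tame_cutoff chi"
  shows "symbol (\<lambda>c q \<omega> p. chi (2/3 * norm p / en c q))"
proof (rule symbol_cutoff[OF assms])
  fix i
  let ?D = "\<lambda>c q \<omega> p. p $ i / en c p * inverse (norm p ^ 2 / en c p ^ 2)"
  have "has_scaled_pderiv (\<lambda>c q \<omega> p. 2/3 * norm p / en c q) i
      (\<lambda>c q \<omega> p. 2/3 * norm p / en c q * ?D c q \<omega> p)"
  proof (rule has_scaled_pderivI)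
    fix c q \<omega> p assume r: "in_region c q \<omega> p"
    have p: "p \<noteq> 0" using in_region_bounds(3)[OF r] in_region_en_pos(2)[OF r] by auto
    from DERIV_cmult[OF has_real_derivative_norm_line[OF p], of "2/3 / en c q"]
    show "((\<lambda>t. 2/3 * norm (p + t *\<^sub>R axis i 1) / en c q) has_real_derivative
        2/3 * norm p / en c q * ?D c q \<omega> p / en c p) (at 0)"
      using p in_region_en_pos[OF r] by (simp add: field_simps power2_eq_square)
  qed
  moreover have "symbol ?D"
    by (intro symbol_mult symbol_p_nth_divide_en symbol_inverse symbol_norm_sq_ratio
        poly_lower_bounded_norm_sq_ratio)
  ultimately show "\<exists>D. symbol D \<and> has_scaled_pderiv (\<lambda>c q \<omega> p. 2/3 * norm p / en c q) i
      (\<lambda>c q \<omega> p. 2/3 * norm p / en c q * D c q \<omega> p)" by blast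
next
  fix c q \<omega> p assume r: "in_region c q \<omega> p"
  have "0 < norm p" using in_region_bounds(3)[OF r] in_region_en_pos(2)[OF r] by linarith
  thus "0 < 2/3 * norm p / en c q" using in_region_en_pos(2)[OF r] by simp
qed

lemma symbol_chiAc: "tame_cutoff chi \<Longrightarrow> symbol (\<lambda>c q \<omega> p. chiAc chi c p q)"
  unfolding chiAc_def
  by (intro symbol_mult symbol_diff symbol_num symbol_cutoff_en_divide_c symbol_cutoff_norm_divide_en)

lemma symbol_multiple_vphi_chiAc:
  assumes "tame_cutoff chi"
  shows "symbol_multiple (\<lambda>c q \<omega>. c) (\<lambda>c q \<omega> p. vphi c p q * chiAc chi c p q)"
proof -
  let ?F = "\<lambda>c q \<omega> p. 1/4 * (sqrt (g_sq_ratio c q \<omega> p) * sqrt (s_ratio c q \<omega> p)) * chiAc chi c p q"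
  have "symbol ?F"
    using assms by (intro symbol_mult symbol_num symbol_sqrt symbol_g_sq_ratio symbol_s_ratio
        poly_lower_bounded_g_sq_ratio poly_lower_bounded_s_ratio symbol_chiAc)
  moreover have "vphi c p q * chiAc chi c p q = c * ?F c q \<omega> p" if "in_region c q \<omega> p" for c q \<omega> p
    using vphi_eq[OF that] by simp
  ultimately show ?thesis unfolding symbol_multiple_def by blast
qed

definition g_ratio :: kin_fun where
  "g_ratio c q \<omega> p = ggg c p q / en c p"

definition g_gamma_ratio :: kin_fun where
  "g_gamma_ratio c q \<omega> p = ggg c p q * gamma0 c p q / en c p"

definition sum_norm_sq_ratio :: kin_fun where
  "sum_norm_sq_ratio c q \<omega> p = norm (p + q) ^ 2 / en c p ^ 2"

definition omega_proj :: "real \<Rightarrow> vec3 \<Rightarrow> vec3 \<Rightarrow> vec3 \<Rightarrow> vec3" where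
  "omega_proj c q \<omega> p = ((p + q) \<bullet> \<omega> / norm (p + q) ^ 2) *\<^sub>R (p + q)"

lemma norm_vec3_squared_eq_sum: "norm (v::vec3) ^ 2 = (\<Sum>j\<in>UNIV. v $ j * v $ j)"
  by (simp add: dot_square_norm[symmetric] inner_vec3_sum)

lemma symbol_g_ratio: "symbol g_ratio"
proof (rule symbol_cong)
  show "symbol (\<lambda>c q \<omega> p. sqrt (g_sq_ratio c q \<omega> p) * (sqrt (en c q) / sqrt (en c p)))"
    by (intro symbol_mult symbol_sqrt symbol_g_sq_ratio poly_lower_bounded_g_sq_ratio
        symbol_sqrt_en_q_divide_sqrt_en_p)
  fix c q \<omega> p assume r: "in_region c q \<omega> p"
  have "sqrt (en c p) * sqrt (en c p) = en c p" using in_region_en_pos(1)[OF r] by simp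
  thus "sqrt (g_sq_ratio c q \<omega> p) * (sqrt (en c q) / sqrt (en c p)) = g_ratio c q \<omega> p"
    unfolding g_ratio_def ggg_eq_g_sq_ratio[OF r] real_sqrt_mult
    using in_region_en_pos[OF r] by (simp add: field_simps)
qed

lemma symbol_g_gamma_ratio: "symbol g_gamma_ratio"
proof (rule symbol_cong)
  show "symbol (\<lambda>c q \<omega> p. sqrt (g_sq_ratio c q \<omega> p) * inverse (sqrt (s_ratio c q \<omega> p))
      * (1 + en c q / en c p))"
    by (intro symbol_mult symbol_add symbol_num symbol_sqrt symbol_inverse symbol_g_sq_ratio
        poly_lower_bounded_g_sq_ratio symbol_s_ratio poly_lower_bounded_s_ratio
        poly_lower_bounded_sqrt symbol_en_q_divide_en_p)
  fix c q \<omega> p assume r: "in_region c q \<omega> p"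
  have "0 < sqrt (s_ratio c q \<omega> p)"
    using poly_lower_bounded_pos[OF poly_lower_bounded_s_ratio r] by simp
  thus "sqrt (g_sq_ratio c q \<omega> p) * inverse (sqrt (s_ratio c q \<omega> p)) * (1 + en c q / en c p)
      = g_gamma_ratio c q \<omega> p"
    unfolding g_gamma_ratio_def gamma0_def ggg_eq_g_sq_ratio[OF r] sss_eq_s_ratio[OF r]
      real_sqrt_mult[of "g_sq_ratio c q \<omega> p"] real_sqrt_mult[of "s_ratio c q \<omega> p"]
    using in_region_en_pos[OF r] by (simp add: field_simps)
qed

lemma symbol_sum_norm_sq_ratio: "symbol sum_norm_sq_ratio"
proof (rule symbol_cong)
  show "symbol (\<lambda>c q \<omega> p.
      \<Sum>j\<in>UNIV. (p $ j / en c p + q $ j / en c p) * (p $ j / en c p + q $ j / en c p))"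
    by (intro symbol_sum symbol_mult symbol_add symbol_p_nth_divide_en symbol_q_nth_divide_en)
  fix c q \<omega> p assume r: "in_region c q \<omega> p"
  show "(\<Sum>j\<in>UNIV. (p $ j / en c p + q $ j / en c p) * (p $ j / en c p + q $ j / en c p))
      = sum_norm_sq_ratio c q \<omega> p"
    unfolding sum_norm_sq_ratio_def norm_vec3_squared_eq_sum using in_region_en_pos(1)[OF r]
    by (simp add: sum_divide_distrib field_simps power2_eq_square)
qed

lemma poly_lower_bounded_sum_norm_sq_ratio: "poly_lower_bounded sum_norm_sq_ratio"
  unfolding poly_lower_bounded_def
proof (intro exI[of _ "1/25"] conjI exI[of _ 0] allI impI)
  fix c q \<omega> p assume r: "in_region c q \<omega> p"
  note R = in_region_bounds[OF r] in_region_en_pos[OF r]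
  have "norm p - norm q \<le> norm (p + q)" using norm_triangle_ineq[of "p + q" "- q"] by simp
  hence "(1/5 * en c p)^2 \<le> norm (p + q) ^ 2" using R by (intro power_mono) auto
  thus "1/25 / jbr q ^ 0 \<le> sum_norm_sq_ratio c q \<omega> p"
    unfolding sum_norm_sq_ratio_def using R by (simp add: field_simps power2_eq_square)
qed simp

lemma vec_symbol_omega_proj: "vec_symbol omega_proj"
  unfolding vec_symbol_def
proof
  fix j
  let ?v = "\<lambda>c q p k. p $ k / en c p + q $ k / en c p"
  show "symbol (\<lambda>c q \<omega> p. omega_proj c q \<omega> p $ j)"
  proof (rule symbol_cong)
    show "symbol (\<lambda>c q \<omega> p. (\<Sum>k\<in>UNIV. ?v c q p k * \<omega> $ k) * ?v c q p j
        * inverse (sum_norm_sq_ratio c q \<omega> p))"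
      by (intro symbol_sum symbol_mult symbol_add symbol_p_nth_divide_en symbol_q_nth_divide_en
          symbol_omega_nth symbol_inverse symbol_sum_norm_sq_ratio
          poly_lower_bounded_sum_norm_sq_ratio)
    fix c q \<omega> p assume r: "in_region c q \<omega> p"
    have inner_eq: "(\<Sum>k\<in>UNIV. ?v c q p k * \<omega> $ k) = (p + q) \<bullet> \<omega> / en c p"
      by (simp add: inner_vec3_sum sum_divide_distrib add_divide_distrib[symmetric])
    moreover have "norm (p + q) \<noteq> 0"
      using poly_lower_bounded_pos[OF poly_lower_bounded_sum_norm_sq_ratio r]
      unfolding sum_norm_sq_ratio_def by auto
    ultimately show "(\<Sum>k\<in>UNIV. ?v c q p k * \<omega> $ k) * ?v c q p j * inverse (sum_norm_sq_ratio c q \<omega> p)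
        = omega_proj c q \<omega> p $ j"
      unfolding inner_eq omega_proj_def sum_norm_sq_ratio_def using in_region_en_pos(1)[OF r]
      by (simp add: field_simps power2_eq_square)
  qed
qed

lemma post_momenta_eq:
  assumes r: "in_region c q \<omega> p"
  defines "Z \<equiv> (1 / en c p) *\<^sub>R p + g_ratio c q \<omega> p *\<^sub>R \<omega>
                + (g_gamma_ratio c q \<omega> p - g_ratio c q \<omega> p) *\<^sub>R omega_proj c q \<omega> p"
  shows "ppost c p q \<omega> = (1/2) *\<^sub>R q + en c p *\<^sub>R ((1/2) *\<^sub>R Z)"
    and "qpost c p q \<omega> = (1/2) *\<^sub>R q + en c p *\<^sub>R ((1 / en c p) *\<^sub>R p - (1/2) *\<^sub>R Z)"
proof -
  have P: "en c p \<noteq> 0" using in_region_en_pos(1)[OF r] by simp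
  have N: "norm (p + q) \<noteq> 0"
    using poly_lower_bounded_pos[OF poly_lower_bounded_sum_norm_sq_ratio r]
    unfolding sum_norm_sq_ratio_def by auto
  have "en c p *\<^sub>R Z = p + ggg c p q *\<^sub>R dirv c p q \<omega>"
    unfolding Z_def dirv_def g_ratio_def g_gamma_ratio_def omega_proj_def
    using P N by (simp add: vec_eq_iff field_simps)
  hence half: "en c p *\<^sub>R ((1/2) *\<^sub>R Z) = (1/2) *\<^sub>R p + (ggg c p q / 2) *\<^sub>R dirv c p q \<omega>"
    by (metis (no_types) scaleR_add_right scaleR_scaleR mult.commute times_divide_eq_right mult_1_right)
  show "ppost c p q \<omega> = (1/2) *\<^sub>R q + en c p *\<^sub>R ((1/2) *\<^sub>R Z)"
    unfolding ppost_def half by (simp add: scaleR_add_right)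
  show "qpost c p q \<omega> = (1/2) *\<^sub>R q + en c p *\<^sub>R ((1 / en c p) *\<^sub>R p - (1/2) *\<^sub>R Z)"
  proof -
    have "(1/2) *\<^sub>R p + (1/2) *\<^sub>R p = p" by (metis scaleR_add_left field_sum_of_halves scaleR_one)
    thus ?thesis
      unfolding qpost_def scaleR_diff_right half using P by (simp add: scaleR_add_right algebra_simps)
  qed
qed

lemma affine_vec_symbol_post_momenta:
  "affine_vec_symbol (\<lambda>c q \<omega> p. ppost c p q \<omega>)" "affine_vec_symbol (\<lambda>c q \<omega> p. qpost c p q \<omega>)"
proof -
  define Z where "Z c q \<omega> p = (1 / en c p) *\<^sub>R p + g_ratio c q \<omega> p *\<^sub>R \<omega>
      + (g_gamma_ratio c q \<omega> p - g_ratio c q \<omega> p) *\<^sub>R omega_proj c q \<omega> p" for c q \<omega> p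
  have Z: "symbol (\<lambda>c q \<omega> p. Z c q \<omega> p $ j)" for j
  proof -
    have "symbol (\<lambda>c q \<omega> p. p $ j / en c p + g_ratio c q \<omega> p * \<omega> $ j
        + (g_gamma_ratio c q \<omega> p - g_ratio c q \<omega> p) * omega_proj c q \<omega> p $ j)"
      using vec_symbol_omega_proj unfolding vec_symbol_def
      by (intro symbol_add symbol_mult symbol_diff symbol_p_nth_divide_en symbol_g_ratio
          symbol_g_gamma_ratio symbol_omega_nth) auto
    thus ?thesis unfolding Z_def by simp
  qed
  have "vec_symbol (\<lambda>c q \<omega> p. (1/2) *\<^sub>R Z c q \<omega> p)"
    unfolding vec_symbol_def using symbol_mult[OF symbol_num[of "1/2"] Z] by simp
  thus "affine_vec_symbol (\<lambda>c q \<omega> p. ppost c p q \<omega>)"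
    unfolding affine_vec_symbol_def
    by (intro exI[of _ "\<lambda>c q \<omega>. (1/2) *\<^sub>R q"] exI conjI allI impI)
       (auto simp: post_momenta_eq(1) Z_def)
  have "vec_symbol (\<lambda>c q \<omega> p. (1 / en c p) *\<^sub>R p - (1/2) *\<^sub>R Z c q \<omega> p)"
    unfolding vec_symbol_def
    using symbol_diff[OF symbol_p_nth_divide_en symbol_mult[OF symbol_num[of "1/2"] Z]] by simp
  thus "affine_vec_symbol (\<lambda>c q \<omega> p. qpost c p q \<omega>)"
    unfolding affine_vec_symbol_def
    by (intro exI[of _ "\<lambda>c q \<omega>. (1/2) *\<^sub>R q"] exI conjI allI impI)
       (auto simp: post_momenta_eq(2) Z_def)
qed

lemma vec_symbol_norm_poly_bounded: "vec_symbol f \<Longrightarrow> poly_bounded (\<lambda>c q \<omega> p. norm (f c q \<omega> p))"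
  unfolding vec_symbol_def
  by (rule poly_bounded_mono[OF poly_bounded_sum[OF poly_bounded_abs[OF symbol_poly_bounded]]])
     (auto intro: norm_le_l1_cart)

lemma pdiffs_post_momenta_poly_bounded:
  assumes "\<beta> \<noteq> (\<lambda>_. 0)"
  shows "poly_bounded (\<lambda>c q \<omega> p. norm (pdiffs \<beta> (\<lambda>p. ppost c p q \<omega>) p))"
    and "poly_bounded (\<lambda>c q \<omega> p. norm (pdiffs \<beta> (\<lambda>p. qpost c p q \<omega>) p))"
  using affine_vec_symbol_pdiffs[OF affine_vec_symbol_post_momenta(1) assms]
    affine_vec_symbol_pdiffs[OF affine_vec_symbol_post_momenta(2) assms]
  by (auto intro: vec_symbol_norm_poly_bounded)

lemma pdiffs_vphi_chiAc_ratio_poly_bounded: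
  assumes "tame_cutoff chi"
  shows "poly_bounded (\<lambda>c q \<omega> p. \<bar>pdiffs \<beta> (\<lambda>p. vphi c p q * chiAc chi c p q) p\<bar> / \<bar>vphi c p q\<bar>)"
proof -
  obtain F where F: "symbol F" "\<And>c q \<omega> p. in_region c q \<omega> p \<Longrightarrow>
      pdiffs \<beta> (\<lambda>p. vphi c p q * chiAc chi c p q) p = c * F c q \<omega> p"
    using symbol_multiple_pdiffs[OF symbol_multiple_vphi_chiAc[OF assms]]
    unfolding symbol_multiple_def by blast
  let ?V = "\<lambda>c q \<omega> p. sqrt (g_sq_ratio c q \<omega> p) * sqrt (s_ratio c q \<omega> p)"
  have V: "poly_lower_bounded ?V"
    by (intro poly_lower_bounded_mult poly_lower_bounded_sqrt poly_lower_bounded_g_sq_ratio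
        poly_lower_bounded_s_ratio)
  have "poly_bounded (\<lambda>c q \<omega> p. 4 * (F c q \<omega> p * inverse (?V c q \<omega> p)))"
    by (intro poly_bounded_mult poly_boundedI_const[of _ 4] symbol_poly_bounded[OF F(1)]
        poly_bounded_inverse[OF V]) simp
  thus ?thesis
  proof (rule poly_bounded_mono)
    fix c q \<omega> p assume r: "in_region c q \<omega> p"
    have "0 < ?V c q \<omega> p" "1 \<le> c" using poly_lower_bounded_pos[OF V r] in_region_bounds(1)[OF r] .
    thus "\<bar>\<bar>pdiffs \<beta> (\<lambda>p. vphi c p q * chiAc chi c p q) p\<bar> / \<bar>vphi c p q\<bar>\<bar>
        \<le> \<bar>4 * (F c q \<omega> p * inverse (?V c q \<omega> p))\<bar>"
      unfolding F(2)[OF r] vphi_eq[OF r] by (simp add: abs_mult field_simps)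
  qed
qed

theorem lemmaA3:
  fixes chi :: "real \<Rightarrow> real" and \<beta> :: "3 \<Rightarrow> nat"
  assumes smooth: "\<forall>k x. x > 0 \<longrightarrow> ((deriv ^^ k) chi) differentiable (at x)"
    and bnd: "\<forall>r\<ge>0. 0 \<le> chi r \<and> chi r \<le> 1"
    and one: "\<forall>r. 0 \<le> r \<and> r \<le> 1 \<longrightarrow> chi r = 1"
    and zero: "\<forall>r>2. chi r = 0"
    and beta: "\<beta> \<noteq> (\<lambda>_. 0)"
  shows "\<exists>n::nat. n \<ge> 1 \<and> (\<exists>C>0. \<forall>c p q \<omega>.
           c \<ge> 1 \<longrightarrow> norm p \<ge> 3/2 * en c q \<longrightarrow> norm \<omega> = 1 \<longrightarrow>
           \<bar>pdiffs \<beta> (\<lambda>p. vphi c p q * chiAc chi c p q) p\<bar> / \<bar>vphi c p q\<bar>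
           + norm (pdiffs \<beta> (\<lambda>p. ppost c p q \<omega>) p)
           + norm (pdiffs \<beta> (\<lambda>p. qpost c p q \<omega>) p)
           \<le> C * jbr q ^ n)"
proof -
  have "tame_cutoff chi" using smooth one zero by (rule tame_cutoffI)
  hence "poly_bounded (\<lambda>c q \<omega> p. \<bar>pdiffs \<beta> (\<lambda>p. vphi c p q * chiAc chi c p q) p\<bar> / \<bar>vphi c p q\<bar>
           + norm (pdiffs \<beta> (\<lambda>p. ppost c p q \<omega>) p) + norm (pdiffs \<beta> (\<lambda>p. qpost c p q \<omega>) p))"
      (is "poly_bounded ?S")
    by (intro poly_bounded_add pdiffs_vphi_chiAc_ratio_poly_bounded
        pdiffs_post_momenta_poly_bounded beta)
  then obtain C n where C: "0 < C"
    and bound: "\<And>c q \<omega> p. in_region c q \<omega> p \<Longrightarrow> \<bar>?S c q \<omega> p\<bar> \<le> C * jbr q ^ n"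
    by (elim poly_boundedE) blast
  show ?thesis
  proof (intro exI[of _ "n + 1"] conjI exI[of _ C] C allI impI)
    fix c :: real and p q \<omega> :: vec3
    assume "1 \<le> c" "3/2 * en c q \<le> norm p" "norm \<omega> = 1"
    moreover have "0 < en c q" using \<open>1 \<le> c\<close> by (simp add: en_pos)
    ultimately have r: "in_region c q \<omega> p" unfolding in_region_def by simp
    have "C * jbr q ^ n \<le> C * jbr q ^ (n + 1)" using C by (intro mult_left_mono jbr_pow_mono) auto
    with bound[OF r] show "?S c q \<omega> p \<le> C * jbr q ^ (n + 1)" by (meson abs_ge_self order_trans)
  qed simp
qed

end
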